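(* Let $G$ be a finite graph such that no connected component of $\mathcal{I}^1_{\mathrm{AR}}(G)$ is an even cycle. Then the partition $V_1,\dots,V_{\alpha(G)}$ of $V(\mathcal{I}^1_{\mathrm{AR}}(G))$, where $V_i$ is the set of independent sets of $G$ of size $i$, is the unique layering of $\mathcal{I}^1_{\mathrm{AR}}(G)$.
   Context: $\alpha(G)$ is the maximum size of an independent set of $G$. $\mathcal{I}^1_{\mathrm{AR}}(G)$ is the graph whose vertices are the nonempty independent sets of $G$, two being adjacent iff their symmetric difference has exactly one element. A layering of a graph $H$ is a partition of $V(H)$ into an ordered sequence of parts (layers) $V_1,\dots,V_p$ such that: (1) each layer is an independent set of $H$; (2) every edge of $H$ joins vertices in consecutive layers $V_i,V_{i+1}$; (3) for $2\le i\le p$, each vertex of $V_i$ has exactly $i$ neighbours in $V_{i-1}$; (4) for $1\le i\le p$, any two vertices of $V_i$ have at most one common neighbour in $V_{i-1}$ and at most one common neighbour in $V_{i+1}$. *)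

theory Defs
  imports Main
begin

definition simple_graph :: "'a set \<Rightarrow> ('a \<Rightarrow> 'a \<Rightarrow> bool) \<Rightarrow> bool" where
  "simple_graph V E \<longleftrightarrow> (\<forall>x y. E x y \<longrightarrow> x \<in> V \<and> y \<in> V \<and> x \<noteq> y \<and> E y x)"

definition indep_set :: "'a set \<Rightarrow> ('a \<Rightarrow> 'a \<Rightarrow> bool) \<Rightarrow> 'a set \<Rightarrow> bool" where
  "indep_set V E S \<longleftrightarrow> S \<subseteq> V \<and> (\<forall>x\<in>S. \<forall>y\<in>S. \<not> E x y)"

definition indep_number :: "'a set \<Rightarrow> ('a \<Rightarrow> 'a \<Rightarrow> bool) \<Rightarrow> nat" where
  "indep_number V E = Max (card ` {S. indep_set V E S})"

definition IAR_verts :: "'a set \<Rightarrow> ('a \<Rightarrow> 'a \<Rightarrow> bool) \<Rightarrow> 'a set set" where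
  "IAR_verts V E = {S. indep_set V E S \<and> S \<noteq> {}}"

definition IAR_adj :: "'a set \<Rightarrow> 'a set \<Rightarrow> bool" where
  "IAR_adj S T \<longleftrightarrow> card ((S - T) \<union> (T - S)) = 1"

definition component :: "'b set \<Rightarrow> ('b \<Rightarrow> 'b \<Rightarrow> bool) \<Rightarrow> 'b \<Rightarrow> 'b set" where
  "component VH EH x = {y \<in> VH. (\<lambda>a b. a \<in> VH \<and> b \<in> VH \<and> EH a b)\<^sup>*\<^sup>* x y}"

definition is_even_cycle :: "'b set \<Rightarrow> ('b \<Rightarrow> 'b \<Rightarrow> bool) \<Rightarrow> bool" where
  "is_even_cycle C EH \<longleftrightarrow> (\<exists>n f. n \<ge> 3 \<and> even n \<and> bij_betw f {..<n} C \<and>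
     (\<forall>i<n. \<forall>j<n. EH (f i) (f j) \<longleftrightarrow> (j = Suc i mod n \<or> i = Suc j mod n)))"

text \<open>Layering, with layers V_1..V_p stored as a list (index i in the list = layer i+1).\<close>
definition layering :: "'b set \<Rightarrow> ('b \<Rightarrow> 'b \<Rightarrow> bool) \<Rightarrow> 'b set list \<Rightarrow> bool" where
  "layering VH EH Ls \<longleftrightarrow>
     (\<forall>i<length Ls. Ls ! i \<noteq> {}) \<and>
     \<Union>(set Ls) = VH \<and>
     (\<forall>i<length Ls. \<forall>j<length Ls. i \<noteq> j \<longrightarrow> Ls ! i \<inter> Ls ! j = {}) \<and>
     (\<forall>i<length Ls. \<forall>x\<in>Ls ! i. \<forall>y\<in>Ls ! i. \<not> EH x y) \<and>
     (\<forall>x\<in>VH. \<forall>y\<in>VH. EH x y \<longrightarrow>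
        (\<exists>i. Suc i < length Ls \<and>
           ((x \<in> Ls ! i \<and> y \<in> Ls ! Suc i) \<or> (y \<in> Ls ! i \<and> x \<in> Ls ! Suc i)))) \<and>
     (\<forall>i. 1 \<le> i \<and> i < length Ls \<longrightarrow>
        (\<forall>x\<in>Ls ! i. card {y \<in> Ls ! (i - 1). EH x y} = i + 1)) \<and>
     (\<forall>i<length Ls. \<forall>x\<in>Ls ! i. \<forall>y\<in>Ls ! i. x \<noteq> y \<longrightarrow>
        (1 \<le> i \<longrightarrow> card {z \<in> Ls ! (i - 1). EH x z \<and> EH y z} \<le> 1) \<and>
        (Suc i < length Ls \<longrightarrow> card {z \<in> Ls ! Suc i. EH x z \<and> EH y z} \<le> 1))"

end

(* Let level x be the index, counted from 0, of the layer containing the vertex x, and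
   defect x = level x + 1 - |x|; the size layering is the layering of defect 0 everywhere.
   Condition (4) makes the level additive around the 4-cycles of the graph, hence affine on every
   cube of vertices {F \<union> B | B \<subseteq> A} as soon as it is affine on the edges at F. With this one
   shows that a vertex of maximum defect M > 0 is a singleton and that M \<le> 1, and that a vertex of
   minimum defect m < 0 is a maximal independent set of size 1 - m in the bottom layer, whose
   singletons have defect -m, so -m \<le> M. Along edges the defect changes by 0 or 2. Hence, if some
   defect is nonzero, then M = 1, m \<ge> -1, and the component of a singleton of defect 1 consists of
   singletons of defect 1 and maximal pairs of defect -1. Each of these has exactly two neighbours
   and the parity of the size 2-colours the component, which is therefore an even cycle. *)

theory Submission
  imports Defs
begin

section \<open>Two-regular two-coloured components are even cycles\<close>

lemma component_subset: "component VH R x \<subseteq> VH"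
  unfolding component_def by auto

lemma component_self: "x \<in> VH \<Longrightarrow> x \<in> component VH R x"
  unfolding component_def by auto

lemma component_closed:
  "y \<in> component VH R x \<Longrightarrow> z \<in> VH \<Longrightarrow> R y z \<Longrightarrow> z \<in> component VH R x"
  unfolding component_def by (auto intro: rtranclp.rtrancl_into_rtrancl)

lemma component_induct [consumes 1]:
  assumes "y \<in> component VH R x" "P x"
    and "\<And>a b. a \<in> VH \<Longrightarrow> b \<in> VH \<Longrightarrow> R a b \<Longrightarrow> P a \<Longrightarrow> P b"
  shows "P y"
proof -
  have "(\<lambda>a b. a \<in> VH \<and> b \<in> VH \<and> R a b)\<^sup>*\<^sup>* x y"
    using assms(1) unfolding component_def by auto
  then show ?thesis
    by (induction rule: rtranclp_induct) (use assms in auto)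
qed

lemma card_2_eq_doubleton:
  assumes "card A = 2" "a \<in> A" "b \<in> A" "a \<noteq> b"
  shows "A = {a, b}"
proof -
  have "finite A" using assms(1) by (intro card_ge_0_finite) simp
  moreover have "{a, b} \<subseteq> A" "card {a, b} = card A" using assms by simp_all
  ultimately have "{a, b} = A" by (intro card_subset_eq)
  then show ?thesis by simp
qed

lemma ex_max_card:
  assumes "finite Y" "x \<in> Y"
  obtains y where "y \<in> Y" "\<And>z. z \<in> Y \<Longrightarrow> card z \<le> card y"
proof -
  have "Max (card ` Y) \<in> card ` Y" using assms by (intro Max_in) auto
  then obtain y where "y \<in> Y" "card y = Max (card ` Y)" by (metis imageE)
  with that show ?thesis using assms(1) by simp
qed

fun nb_walk :: "('b \<Rightarrow> 'b \<Rightarrow> 'b) \<Rightarrow> 'b \<Rightarrow> 'b \<Rightarrow> nat \<Rightarrow> 'b" where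
  "nb_walk step a b 0 = a"
| "nb_walk step a b (Suc 0) = b"
| "nb_walk step a b (Suc (Suc k)) = step (nb_walk step a b (Suc k)) (nb_walk step a b k)"

locale two_regular_component =
  fixes VH :: "'b set" and R :: "'b \<Rightarrow> 'b \<Rightarrow> bool" and x0 :: 'b
  assumes finite_VH: "finite VH"
    and R_sym: "R x y \<Longrightarrow> R y x"
    and R_irrefl: "\<not> R x x"
    and x0_in_VH: "x0 \<in> VH"
    and two_regular: "y \<in> component VH R x0 \<Longrightarrow> card {z \<in> VH. R y z} = 2"
begin

abbreviation C :: "'b set" where "C \<equiv> component VH R x0"

definition nbrs :: "'b \<Rightarrow> 'b set" where "nbrs y = {z \<in> VH. R y z}"

definition other_nbr :: "'b \<Rightarrow> 'b \<Rightarrow> 'b" where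
  "other_nbr y z = (SOME z'. z' \<in> nbrs y \<and> z' \<noteq> z)"

lemma other_nbr: "y \<in> C \<Longrightarrow> other_nbr y z \<in> nbrs y \<and> other_nbr y z \<noteq> z"
proof -
  assume "y \<in> C"
  then have "card (nbrs y) = 2" unfolding nbrs_def by (rule two_regular)
  then obtain a b where "a \<noteq> b" "nbrs y = {a, b}"
    unfolding card_2_iff by blast
  then have "\<exists>z'. z' \<in> nbrs y \<and> z' \<noteq> z" by (cases "a = z") auto
  then show ?thesis unfolding other_nbr_def by (rule someI_ex)
qed

definition walk :: "nat \<Rightarrow> 'b" where
  "walk = nb_walk other_nbr x0 (SOME y. y \<in> nbrs x0)"

lemma walk_0: "walk 0 = x0"
  unfolding walk_def by simp

lemma walk_Suc_Suc: "walk (Suc (Suc k)) = other_nbr (walk (Suc k)) (walk k)"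
  unfolding walk_def by simp

lemma walk_in_C_and_adj: "walk k \<in> C \<and> walk (Suc k) \<in> nbrs (walk k)"
proof (induction k)
  case 0
  have "nbrs x0 \<noteq> {}"
    using two_regular[OF component_self[OF x0_in_VH]] unfolding nbrs_def
    by (metis card.empty zero_neq_numeral)
  then have "walk (Suc 0) \<in> nbrs x0"
    unfolding walk_def by (simp add: some_in_eq)
  then show ?case using walk_0 component_self[OF x0_in_VH] by simp
next
  case (Suc k)
  then have "walk (Suc k) \<in> C"
    using component_closed[of "walk k" VH R x0 "walk (Suc k)"] unfolding nbrs_def by blast
  then show ?case using other_nbr walk_Suc_Suc by simp
qed

lemma walk_in_C: "walk k \<in> C"
  using walk_in_C_and_adj[of k] by (rule conjunct1)

lemma walk_in_VH: "walk k \<in> VH"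
  by (rule subsetD[OF component_subset walk_in_C])

lemma walk_adj: "R (walk k) (walk (Suc k))"
  using conjunct2[OF walk_in_C_and_adj[of k]] unfolding nbrs_def by simp

lemma walk_no_backtrack: "walk (Suc (Suc k)) \<noteq> walk k"
  using other_nbr[OF walk_in_C, of "Suc k" "walk k"] by (simp add: walk_Suc_Suc)

lemma nbrs_walk_Suc: "nbrs (walk (Suc k)) = {walk k, walk (Suc (Suc k))}"
proof (rule card_2_eq_doubleton)
  show "card (nbrs (walk (Suc k))) = 2" using two_regular[OF walk_in_C] unfolding nbrs_def .
  show "walk k \<in> nbrs (walk (Suc k))" using walk_adj R_sym walk_in_VH unfolding nbrs_def by blast
  show "walk (Suc (Suc k)) \<in> nbrs (walk (Suc k))" using walk_adj walk_in_VH unfolding nbrs_def by blast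
  show "walk k \<noteq> walk (Suc (Suc k))" using walk_no_backtrack[of k] by metis
qed

definition period :: nat where "period = (LEAST j. \<exists>i<j. walk i = walk j)"

lemma walk_repeats: "\<exists>j. \<exists>i<j. walk i = walk j"
proof (rule ccontr)
  assume no_rep: "\<nexists>j. \<exists>i<j. walk i = walk j"
  have "inj_on walk {..card C}"
  proof (rule inj_onI)
    fix a b assume "walk a = walk b"
    with no_rep show "a = b" by (cases a b rule: linorder_cases) (blast, simp, metis)
  qed
  then have "card (walk ` {..card C}) = Suc (card C)"
    by (simp add: card_image)
  moreover have "card (walk ` {..card C}) \<le> card C"
    using finite_subset[OF component_subset finite_VH] walk_in_C by (intro card_mono) auto
  ultimately show False by simp
qed

lemma walk_period_repeats: "\<exists>i<period. walk i = walk period"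
  unfolding period_def using walk_repeats by (rule LeastI_ex)

lemma inj_on_walk: "inj_on walk {..<period}"
proof (rule inj_onI)
  have no_rep: "walk i \<noteq> walk j" if "i < j" "j < period" for i j
    using not_less_Least[of j "\<lambda>j. \<exists>i<j. walk i = walk j"] that
    unfolding period_def by blast
  fix a b assume "a \<in> {..<period}" "b \<in> {..<period}" "walk a = walk b"
  then show "a = b" using no_rep by (cases a b rule: linorder_cases) (blast, simp, metis lessThan_iff)
qed

lemma walk_eq_iff: "i < period \<Longrightarrow> j < period \<Longrightarrow> walk i = walk j \<longleftrightarrow> i = j"
  using inj_on_eq_iff[OF inj_on_walk] by simp

text \<open>The first repetition of a non-backtracking walk in a 2-regular graph is a return to
  its start: an earlier repetition point would have three distinct neighbours.\<close>

lemma walk_period: "walk period = x0"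
proof -
  obtain i where i: "i < period" "walk i = walk period"
    using walk_period_repeats by blast
  obtain q where q: "period = Suc q" using i(1) by (cases period) auto
  have "i = 0"
  proof (rule ccontr)
    assume "i \<noteq> 0"
    then obtain i' where i': "i = Suc i'" by (cases i) auto
    have "R (walk i) (walk q)"
      using walk_adj[of q] R_sym q i(2) by simp
    then have "walk q \<in> nbrs (walk i)"
      using walk_in_VH unfolding nbrs_def by simp
    then have "walk q = walk i' \<or> walk q = walk (Suc i)"
      using nbrs_walk_Suc[of i'] i' by simp
    then show False
    proof
      assume "walk q = walk i'"
      then have "q = i'" using i q i' by (intro inj_onD[OF inj_on_walk]) auto
      then show False using i q i' by simp
    next
      assume h: "walk q = walk (Suc i)"
      show False
      proof (cases "Suc i < period")
        case True
        then have "q = Suc i" using h q by (intro inj_onD[OF inj_on_walk]) auto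
        then show False using walk_no_backtrack[of i] i q by simp
      next
        case False
        then have "q = i" using i q by simp
        then show False using h walk_adj[of i] R_irrefl by simp
      qed
    qed
  qed
  then show ?thesis using i walk_0 by simp
qed

lemma period_ge_3: "3 \<le> period"
proof -
  have "period \<noteq> 0" using walk_period_repeats by auto
  moreover have "period \<noteq> 1" using walk_adj[of 0] R_irrefl walk_period walk_0 by auto
  moreover have "period \<noteq> 2"
    using walk_no_backtrack[of 0] walk_period walk_0 by (auto simp: numeral_2_eq_2)
  ultimately show ?thesis by linarith
qed

definition prev :: "nat \<Rightarrow> nat" where
  "prev i = (if i = 0 then period - 1 else i - 1)"

lemma prev_less: "i < period \<Longrightarrow> prev i < period"
  unfolding prev_def using period_ge_3 by auto

lemma Suc_prev_mod: "i < period \<Longrightarrow> Suc (prev i) mod period = i"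
  unfolding prev_def using period_ge_3 by auto

lemma Suc_mod_neq_prev: "i < period \<Longrightarrow> Suc i mod period \<noteq> prev i"
  unfolding prev_def using period_ge_3 by (cases "Suc i < period") (auto simp: mod_if)

lemma walk_adj_Suc_mod: "i < period \<Longrightarrow> R (walk i) (walk (Suc i mod period))"
proof (cases "Suc i < period")
  case False
  moreover assume "i < period"
  ultimately have "Suc i = period" by simp
  then show ?thesis using walk_adj[of i] walk_period walk_0 by simp
qed (use walk_adj in simp)

lemma nbrs_walk:
  assumes "i < period"
  shows "nbrs (walk i) = {walk (Suc i mod period), walk (prev i)}"
proof (rule card_2_eq_doubleton)
  show "card (nbrs (walk i)) = 2" using two_regular[OF walk_in_C] unfolding nbrs_def .
  show "walk (Suc i mod period) \<in> nbrs (walk i)"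
    using walk_adj_Suc_mod[OF assms] walk_in_VH unfolding nbrs_def by simp
  have "R (walk (prev i)) (walk i)"
    using walk_adj_Suc_mod[OF prev_less[OF assms]] Suc_prev_mod[OF assms] by simp
  then show "walk (prev i) \<in> nbrs (walk i)"
    using R_sym walk_in_VH unfolding nbrs_def by simp
  have "Suc i mod period < period" using period_ge_3 by simp
  then show "walk (Suc i mod period) \<noteq> walk (prev i)"
    using walk_eq_iff Suc_mod_neq_prev[OF assms] prev_less[OF assms] by simp
qed

lemma component_eq_walk_image: "C = walk ` {..<period}"
proof
  show "walk ` {..<period} \<subseteq> C" using walk_in_C by blast
  show "C \<subseteq> walk ` {..<period}"
  proof
    fix y assume "y \<in> C"
    then show "y \<in> walk ` {..<period}"
    proof (rule component_induct)
      show "x0 \<in> walk ` {..<period}"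
        by (rule image_eqI[of _ _ 0]) (use walk_0 period_ge_3 in auto)
    next
      fix a b assume "b \<in> VH" "R a b" "a \<in> walk ` {..<period}"
      then obtain k where k: "k < period" "b \<in> nbrs (walk k)"
        unfolding nbrs_def by auto
      have "Suc k mod period < period" using period_ge_3 by simp
      then show "b \<in> walk ` {..<period}"
        using k nbrs_walk prev_less by auto
    qed
  qed
qed

lemma walk_adj_iff:
  assumes "a < period" "b < period"
  shows "R (walk a) (walk b) \<longleftrightarrow> b = Suc a mod period \<or> a = Suc b mod period"
proof
  assume "R (walk a) (walk b)"
  then have "walk b \<in> {walk (Suc a mod period), walk (prev a)}"
    using nbrs_walk[OF assms(1)] walk_in_VH unfolding nbrs_def by blast
  moreover have "Suc a mod period < period" using period_ge_3 by simp
  ultimately have "b = Suc a mod period \<or> b = prev a"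
    using walk_eq_iff prev_less assms by auto
  then show "b = Suc a mod period \<or> a = Suc b mod period"
    using Suc_prev_mod[OF assms(1)] by auto
next
  assume "b = Suc a mod period \<or> a = Suc b mod period"
  then show "R (walk a) (walk b)" using walk_adj_Suc_mod assms R_sym by auto
qed

theorem component_is_cycle:
  "\<exists>n f. 3 \<le> n \<and> bij_betw f {..<n} C \<and>
     (\<forall>i<n. \<forall>j<n. R (f i) (f j) \<longleftrightarrow> (j = Suc i mod n \<or> i = Suc j mod n))"
proof (intro exI conjI)
  show "3 \<le> period" by (rule period_ge_3)
  show "bij_betw walk {..<period} C"
    unfolding bij_betw_def using inj_on_walk component_eq_walk_image by simp
  show "\<forall>i<period. \<forall>j<period. R (walk i) (walk j) \<longleftrightarrow> (j = Suc i mod period \<or> i = Suc j mod period)"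
    using walk_adj_iff by simp
qed

end

lemma cycle_even_if_two_coloured:
  fixes col :: "'b \<Rightarrow> bool"
  assumes n: "3 \<le> n" and f: "bij_betw f {..<n} C"
    and adj: "\<forall>i<n. \<forall>j<n. R (f i) (f j) \<longleftrightarrow> (j = Suc i mod n \<or> i = Suc j mod n)"
    and colour: "\<And>y z. y \<in> C \<Longrightarrow> z \<in> C \<Longrightarrow> R y z \<Longrightarrow> col y \<noteq> col z"
  shows "even n"
proof -
  have f_in: "f i \<in> C" if "i < n" for i
    using f that unfolding bij_betw_def by auto
  have colour_step: "col (f i) \<noteq> col (f j)" if "i < n" "j < n" "j = Suc i mod n" for i j
    using colour[OF f_in f_in] adj that by blast
  have alternating: "col (f i) = (col (f 0) = even i)" if "i < n" for i
    using that
  proof (induction i)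
    case (Suc i)
    then have "col (f i) \<noteq> col (f (Suc i))" using colour_step[of i "Suc i"] by simp
    then show ?case using Suc by auto
  qed simp
  have "col (f (n - 1)) \<noteq> col (f 0)" using colour_step[of "n - 1" 0] n by simp
  then have "odd (n - 1)" using alternating[of "n - 1"] n by auto
  then show ?thesis using n by simp
qed

theorem two_regular_bipartite_component_is_even_cycle:
  fixes col :: "'b \<Rightarrow> bool"
  assumes "two_regular_component VH R x0"
    and "\<And>y z. y \<in> component VH R x0 \<Longrightarrow> z \<in> component VH R x0 \<Longrightarrow> R y z \<Longrightarrow> col y \<noteq> col z"
  shows "is_even_cycle (component VH R x0) R"
proof -
  obtain n f where "3 \<le> n" "bij_betw f {..<n} (component VH R x0)"
    "\<forall>i<n. \<forall>j<n. R (f i) (f j) \<longleftrightarrow> (j = Suc i mod n \<or> i = Suc j mod n)"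
    using two_regular_component.component_is_cycle[OF assms(1)] by blast
  moreover have "even n" using cycle_even_if_two_coloured[OF calculation assms(2)] .
  ultimately show ?thesis unfolding is_even_cycle_def by blast
qed

section \<open>The graph of independent sets and its layering by size\<close>

lemma IAR_adj_symI: "IAR_adj x y \<Longrightarrow> IAR_adj y x"
  unfolding IAR_adj_def by (simp add: Un_commute)

lemma IAR_adj_irrefl: "\<not> IAR_adj x x"
  unfolding IAR_adj_def by simp

lemma IAR_adj_removeI: "a \<in> x \<Longrightarrow> IAR_adj x (x - {a})"
proof -
  assume "a \<in> x"
  then have "(x - (x - {a})) \<union> ((x - {a}) - x) = {a}" by blast
  then show ?thesis unfolding IAR_adj_def by simp
qed

lemma IAR_adj_insertI: "b \<notin> x \<Longrightarrow> IAR_adj x (insert b x)"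
proof -
  assume "b \<notin> x"
  then have "(x - insert b x) \<union> (insert b x - x) = {b}" by blast
  then show ?thesis unfolding IAR_adj_def by simp
qed

lemma IAR_adjE:
  assumes "IAR_adj x y"
  obtains a where "a \<in> x" "y = x - {a}" | b where "b \<notin> x" "y = insert b x"
proof -
  obtain c where c: "(x - y) \<union> (y - x) = {c}"
    using assms unfolding IAR_adj_def by (rule card_1_singletonE)
  show ?thesis
  proof (cases "c \<in> x")
    case True
    then have "y = x - {c}" using c by (simp add: set_eq_iff) (metis)
    with True that(1) show ?thesis by blast
  next
    case False
    then have "y = insert c x" using c by (simp add: set_eq_iff) (metis)
    with False that(2) show ?thesis by blast
  qed
qed

lemma IAR_adj_card:
  assumes "finite x" "IAR_adj x y"
  shows "y \<subseteq> x \<and> Suc (card y) = card x \<or> x \<subseteq> y \<and> card y = Suc (card x)"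
  using assms(2)
proof (cases rule: IAR_adjE)
  case (1 a)
  then show ?thesis using assms(1) card_Suc_Diff1 by fastforce
next
  case (2 b)
  then show ?thesis using assms(1) by auto
qed

lemma lower_IAR_nbrs:
  assumes "finite x"
  shows "{y. IAR_adj x y \<and> Suc (card y) = card x} = (\<lambda>a. x - {a}) ` x"
proof (intro equalityI subsetI)
  fix y assume "y \<in> {y. IAR_adj x y \<and> Suc (card y) = card x}"
  then have "IAR_adj x y" "Suc (card y) = card x" by auto
  then show "y \<in> (\<lambda>a. x - {a}) ` x"
    using assms by (cases rule: IAR_adjE) auto
next
  fix y assume "y \<in> (\<lambda>a. x - {a}) ` x"
  then obtain a where a: "a \<in> x" "y = x - {a}" by blast
  then show "y \<in> {y. IAR_adj x y \<and> Suc (card y) = card x}"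
    using IAR_adj_removeI[OF a(1)] card_Suc_Diff1[OF assms a(1)] by simp
qed

lemma card_lower_IAR_nbrs:
  assumes "finite x"
  shows "card {y. IAR_adj x y \<and> Suc (card y) = card x} = card x"
proof -
  have "inj_on (\<lambda>a. x - {a}) x" by (rule inj_onI) blast
  then show ?thesis unfolding lower_IAR_nbrs[OF assms] by (rule card_image)
qed

lemma common_lower_IAR_nbr:
  assumes "finite x" "finite y" "card x = card y" "x \<noteq> y"
    and "IAR_adj x z" "IAR_adj y z" "Suc (card z) = card x"
  shows "z = x \<inter> y"
proof -
  have "z \<subseteq> x" using IAR_adj_card[OF assms(1,5)] assms(7) by auto
  moreover have "z \<subseteq> y" using IAR_adj_card[OF assms(2,6)] assms(3,7) by auto
  moreover have "\<not> x \<subseteq> y" using card_subset_eq[OF assms(2), of x] assms(3,4) by auto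
  then have "card (x \<inter> y) < card x" by (intro psubset_card_mono[OF assms(1)]) auto
  then have "card (x \<inter> y) \<le> card z" using assms(7) by simp
  ultimately show ?thesis using card_seteq[of "x \<inter> y" z] assms(1) by blast
qed

lemma common_upper_IAR_nbr:
  assumes "finite x" "finite y" "card x = card y" "x \<noteq> y"
    and "IAR_adj x z" "IAR_adj y z" "card z = Suc (card x)"
  shows "z = x \<union> y"
proof -
  have "x \<subseteq> z" using IAR_adj_card[OF assms(1,5)] assms(7) by auto
  moreover have "y \<subseteq> z" using IAR_adj_card[OF assms(2,6)] assms(3,7) by auto
  moreover have "finite z" using assms(7) by (intro card_ge_0_finite) simp
  moreover have "\<not> y \<subseteq> x" using card_subset_eq[OF assms(1), of y] assms(3,4) by auto
  then have "card x < card (x \<union> y)" using assms(1,2) by (intro psubset_card_mono) auto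
  then have "card z \<le> card (x \<union> y)" using assms(7) by simp
  ultimately show ?thesis using card_seteq[of z "x \<union> y"] by blast
qed

lemma indep_set_subset: "indep_set V E S \<Longrightarrow> T \<subseteq> S \<Longrightarrow> indep_set V E T"
  unfolding indep_set_def by blast

lemma indep_set_finite: "finite V \<Longrightarrow> indep_set V E S \<Longrightarrow> finite S"
  unfolding indep_set_def using finite_subset by blast

lemma finite_indep_sets: "finite V \<Longrightarrow> finite {S. indep_set V E S}"
  unfolding indep_set_def by (rule finite_subset[of _ "Pow V"]) auto

lemma card_le_indep_number: "finite V \<Longrightarrow> indep_set V E S \<Longrightarrow> card S \<le> indep_number V E"
  unfolding indep_number_def using finite_indep_sets by (intro Max_ge) auto

lemma indep_number_attained:
  assumes "finite V"
  obtains S where "indep_set V E S" "card S = indep_number V E"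
proof -
  have "{} \<in> {S. indep_set V E S}" unfolding indep_set_def by simp
  then have "indep_number V E \<in> card ` {S. indep_set V E S}"
    unfolding indep_number_def using finite_indep_sets[OF assms] by (intro Max_in) auto
  then obtain S where "indep_set V E S" "card S = indep_number V E" by auto
  with that show ?thesis .
qed

lemma IAR_verts_iff_card:
  "finite V \<Longrightarrow> S \<in> IAR_verts V E \<longleftrightarrow> indep_set V E S \<and> 0 < card S"
  unfolding IAR_verts_def using indep_set_finite by (auto simp: card_gt_0_iff)

definition size_layers :: "'a set \<Rightarrow> ('a \<Rightarrow> 'a \<Rightarrow> bool) \<Rightarrow> 'a set set list" where
  "size_layers V E = map (\<lambda>i. {S. indep_set V E S \<and> card S = i}) [1..<indep_number V E + 1]"

lemma length_size_layers: "length (size_layers V E) = indep_number V E"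
  unfolding size_layers_def by simp

lemma mem_size_layers_iff:
  "i < length (size_layers V E) \<Longrightarrow> S \<in> size_layers V E ! i \<longleftrightarrow> indep_set V E S \<and> card S = Suc i"
  unfolding size_layers_def by (simp del: upt_Suc)

lemma IAR_vert_in_size_layers:
  assumes "finite V" "S \<in> IAR_verts V E"
  shows "card S - 1 < length (size_layers V E) \<and> S \<in> size_layers V E ! (card S - 1)"
proof -
  have S: "indep_set V E S" "Suc (card S - 1) = card S"
    using assms(2) IAR_verts_iff_card[OF assms(1)] by auto
  moreover have "card S - 1 < length (size_layers V E)"
    using card_le_indep_number[OF assms(1) S(1)] S(2) by (simp add: length_size_layers)
  ultimately show ?thesis by (simp add: mem_size_layers_iff)
qed

lemma size_layers_nonempty:
  assumes "finite V" "i < length (size_layers V E)"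
  shows "size_layers V E ! i \<noteq> {}"
proof -
  obtain S where S: "indep_set V E S" "card S = indep_number V E"
    using indep_number_attained[OF assms(1)] .
  then obtain T where "T \<subseteq> S" "card T = Suc i"
    using assms(2) obtain_subset_with_card_n[of "Suc i" S] by (auto simp: length_size_layers)
  then have "T \<in> size_layers V E ! i"
    using assms(2) indep_set_subset[OF S(1)] by (simp add: mem_size_layers_iff)
  then show ?thesis by blast
qed

lemma Union_size_layers:
  assumes "finite V"
  shows "\<Union>(set (size_layers V E)) = IAR_verts V E"
proof (intro equalityI subsetI)
  fix S assume "S \<in> \<Union>(set (size_layers V E))"
  then obtain i where "i < length (size_layers V E)" "S \<in> size_layers V E ! i"
    by (auto simp: in_set_conv_nth)
  then show "S \<in> IAR_verts V E"
    by (simp add: mem_size_layers_iff IAR_verts_iff_card[OF assms])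
next
  fix S assume "S \<in> IAR_verts V E"
  then show "S \<in> \<Union>(set (size_layers V E))"
    using IAR_vert_in_size_layers[OF assms] nth_mem by blast
qed

lemma size_layers_disjoint:
  "i < length (size_layers V E) \<Longrightarrow> j < length (size_layers V E) \<Longrightarrow> i \<noteq> j \<Longrightarrow>
    size_layers V E ! i \<inter> size_layers V E ! j = {}"
  by (auto simp: mem_size_layers_iff)

lemma IAR_adj_size_layers_consecutive:
  assumes "finite V" "x \<in> IAR_verts V E" "y \<in> IAR_verts V E" "IAR_adj x y"
  shows "\<exists>i. Suc i < length (size_layers V E) \<and>
    (x \<in> size_layers V E ! i \<and> y \<in> size_layers V E ! Suc i \<or>
     y \<in> size_layers V E ! i \<and> x \<in> size_layers V E ! Suc i)"
proof -
  have "finite x" using assms(1,2) indep_set_finite unfolding IAR_verts_def by blast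
  then have "Suc (card y) = card x \<or> card y = Suc (card x)"
    using IAR_adj_card assms(4) by blast
  moreover have "0 < card x" "0 < card y" using assms(1-3) IAR_verts_iff_card by auto
  ultimately have "card x - 1 = Suc (card y - 1) \<or> card y - 1 = Suc (card x - 1)" by auto
  then show ?thesis
    using IAR_vert_in_size_layers[OF assms(1,2)] IAR_vert_in_size_layers[OF assms(1,3)] by auto
qed

lemma card_lower_nbrs_size_layers:
  assumes "finite V" "1 \<le> i" "i < length (size_layers V E)" "x \<in> size_layers V E ! i"
  shows "card {y \<in> size_layers V E ! (i - 1). IAR_adj x y} = i + 1"
proof -
  have x: "indep_set V E x" "card x = Suc i" using assms(3,4) by (simp_all add: mem_size_layers_iff)
  have fin: "finite x" using indep_set_finite[OF assms(1) x(1)] .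
  have "{y \<in> size_layers V E ! (i - 1). IAR_adj x y} = {y. IAR_adj x y \<and> Suc (card y) = card x}"
  proof (intro equalityI subsetI)
    fix y assume y: "y \<in> {y. IAR_adj x y \<and> Suc (card y) = card x}"
    then have "IAR_adj x y" "y \<subseteq> x" "card y = Suc (i - 1)"
      using IAR_adj_card[OF fin, of y] x(2) assms(2) by auto
    then show "y \<in> {y \<in> size_layers V E ! (i - 1). IAR_adj x y}"
      using assms(3) indep_set_subset[OF x(1)] by (simp add: mem_size_layers_iff)
  qed (use assms(2,3) x(2) in \<open>auto simp: mem_size_layers_iff\<close>)
  then show ?thesis using card_lower_IAR_nbrs[OF fin] x(2) by simp
qed

lemma card_common_lower_nbrs_size_layers:
  assumes "finite V" "1 \<le> i" "i < length (size_layers V E)"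
    and "x \<in> size_layers V E ! i" "y \<in> size_layers V E ! i" "x \<noteq> y"
  shows "card {z \<in> size_layers V E ! (i - 1). IAR_adj x z \<and> IAR_adj y z} \<le> 1"
proof -
  have x: "indep_set V E x" "card x = Suc i" and y: "indep_set V E y" "card y = Suc i"
    using assms(3-5) by (simp_all add: mem_size_layers_iff)
  have fin: "finite x" "finite y" using x(1) y(1) indep_set_finite[OF assms(1)] by auto
  have "{z \<in> size_layers V E ! (i - 1). IAR_adj x z \<and> IAR_adj y z} \<subseteq> {x \<inter> y}"
    using assms(2,3,6) x(2) y(2) common_lower_IAR_nbr[OF fin] by (auto simp: mem_size_layers_iff)
  then have "card {z \<in> size_layers V E ! (i - 1). IAR_adj x z \<and> IAR_adj y z} \<le> card {x \<inter> y}"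
    by (intro card_mono) auto
  then show ?thesis by simp
qed

lemma card_common_upper_nbrs_size_layers:
  assumes "finite V" "Suc i < length (size_layers V E)"
    and "x \<in> size_layers V E ! i" "y \<in> size_layers V E ! i" "x \<noteq> y"
  shows "card {z \<in> size_layers V E ! Suc i. IAR_adj x z \<and> IAR_adj y z} \<le> 1"
proof -
  have x: "indep_set V E x" "card x = Suc i" and y: "indep_set V E y" "card y = Suc i"
    using assms(2-4) by (simp_all add: mem_size_layers_iff)
  have fin: "finite x" "finite y" using x(1) y(1) indep_set_finite[OF assms(1)] by auto
  have "{z \<in> size_layers V E ! Suc i. IAR_adj x z \<and> IAR_adj y z} \<subseteq> {x \<union> y}"
    using assms(2,5) x(2) y(2) common_upper_IAR_nbr[OF fin] by (auto simp: mem_size_layers_iff)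
  then have "card {z \<in> size_layers V E ! Suc i. IAR_adj x z \<and> IAR_adj y z} \<le> card {x \<union> y}"
    by (intro card_mono) auto
  then show ?thesis by simp
qed

lemma size_layers_no_inner_edges:
  assumes "finite V" "i < length (size_layers V E)"
    and "x \<in> size_layers V E ! i" "y \<in> size_layers V E ! i"
  shows "\<not> IAR_adj x y"
proof -
  have "card x = card y" "finite x"
    using assms indep_set_finite[OF assms(1)] by (auto simp: mem_size_layers_iff)
  then show ?thesis using IAR_adj_card[of x y] by auto
qed

theorem size_layers_is_layering:
  assumes "finite V"
  shows "layering (IAR_verts V E) IAR_adj (size_layers V E)"
proof -
  let ?L = "size_layers V E"
  have nonempty: "\<forall>i<length ?L. ?L ! i \<noteq> {}"
    using size_layers_nonempty[OF assms] by blast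
  have disjoint: "\<forall>i<length ?L. \<forall>j<length ?L. i \<noteq> j \<longrightarrow> ?L ! i \<inter> ?L ! j = {}"
    using size_layers_disjoint by blast
  have independent: "\<forall>i<length ?L. \<forall>x\<in>?L ! i. \<forall>y\<in>?L ! i. \<not> IAR_adj x y"
    using size_layers_no_inner_edges[OF assms] by blast
  have consecutive: "\<forall>x\<in>IAR_verts V E. \<forall>y\<in>IAR_verts V E. IAR_adj x y \<longrightarrow>
      (\<exists>i. Suc i < length ?L \<and> (x \<in> ?L ! i \<and> y \<in> ?L ! Suc i \<or> y \<in> ?L ! i \<and> x \<in> ?L ! Suc i))"
    using IAR_adj_size_layers_consecutive[OF assms] by blast
  have lower_degree: "\<forall>i. 1 \<le> i \<and> i < length ?L \<longrightarrow>
      (\<forall>x\<in>?L ! i. card {y \<in> ?L ! (i - 1). IAR_adj x y} = i + 1)"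
    using card_lower_nbrs_size_layers[OF assms] by blast
  have common_nbrs: "\<forall>i<length ?L. \<forall>x\<in>?L ! i. \<forall>y\<in>?L ! i. x \<noteq> y \<longrightarrow>
      (1 \<le> i \<longrightarrow> card {z \<in> ?L ! (i - 1). IAR_adj x z \<and> IAR_adj y z} \<le> 1) \<and>
      (Suc i < length ?L \<longrightarrow> card {z \<in> ?L ! Suc i. IAR_adj x z \<and> IAR_adj y z} \<le> 1)"
  proof (intro allI impI ballI conjI)
    fix i x y assume "i < length ?L" "x \<in> ?L ! i" "y \<in> ?L ! i" "x \<noteq> y"
    then show "1 \<le> i \<Longrightarrow> card {z \<in> ?L ! (i - 1). IAR_adj x z \<and> IAR_adj y z} \<le> 1"
      and "Suc i < length ?L \<Longrightarrow> card {z \<in> ?L ! Suc i. IAR_adj x z \<and> IAR_adj y z} \<le> 1"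
      using card_common_lower_nbrs_size_layers[OF assms] card_common_upper_nbrs_size_layers[OF assms]
      by simp_all
  qed
  show ?thesis unfolding layering_def
    by (intro conjI nonempty Union_size_layers[OF assms] disjoint independent consecutive
        lower_degree common_nbrs)
qed

section \<open>An arbitrary layering\<close>

locale IAR_layering =
  fixes V :: "'a set" and E :: "'a \<Rightarrow> 'a \<Rightarrow> bool" and Ls :: "'a set set list"
  assumes finite_V: "finite V"
    and layering: "layering (IAR_verts V E) IAR_adj Ls"
begin

abbreviation VH :: "'a set set" where "VH \<equiv> IAR_verts V E"

lemma VH_iff: "x \<in> VH \<longleftrightarrow> x \<subseteq> V \<and> x \<noteq> {} \<and> (\<forall>a\<in>x. \<forall>b\<in>x. \<not> E a b)"
  unfolding IAR_verts_def indep_set_def by auto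

lemma VH_subset_V: "x \<in> VH \<Longrightarrow> x \<subseteq> V"
  using VH_iff by blast

lemma VH_finite: "x \<in> VH \<Longrightarrow> finite x"
  using finite_subset[OF VH_subset_V finite_V] .

lemma VH_nonempty: "x \<in> VH \<Longrightarrow> x \<noteq> {}"
  using VH_iff by blast

lemma VH_card_pos: "x \<in> VH \<Longrightarrow> 0 < card x"
  using VH_finite VH_nonempty by (simp add: card_gt_0_iff)

lemma VH_subset: "x \<in> VH \<Longrightarrow> y \<subseteq> x \<Longrightarrow> y \<noteq> {} \<Longrightarrow> y \<in> VH"
  unfolding VH_iff by blast

lemma VH_remove:
  assumes "x \<in> VH" "2 \<le> card x"
  shows "x - {a} \<in> VH"
proof -
  have "\<not> x \<subseteq> {a}"
  proof
    assume "x \<subseteq> {a}"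
    then have "card x \<le> card {a}" by (intro card_mono) simp_all
    with assms(2) show False by simp
  qed
  then have "x - {a} \<noteq> {}" by auto
  then show ?thesis by (rule VH_subset[OF assms(1), rotated]) auto
qed

lemma finite_VH: "finite VH"
  by (rule finite_subset[of _ "Pow V"]) (use VH_subset_V finite_V in auto)

lemma layers_nonempty: "i < length Ls \<Longrightarrow> Ls ! i \<noteq> {}"
proof -
  have "\<forall>i<length Ls. Ls ! i \<noteq> {}"
    using layering unfolding layering_def by (elim conjE) assumption
  then show "i < length Ls \<Longrightarrow> Ls ! i \<noteq> {}" by simp
qed

lemma Union_layers: "\<Union>(set Ls) = VH"
  using layering unfolding layering_def by (elim conjE) assumption

lemma layers_disjoint:
  assumes "i < length Ls" "j < length Ls" "i \<noteq> j"
  shows "Ls ! i \<inter> Ls ! j = {}"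
proof -
  have "\<forall>i<length Ls. \<forall>j<length Ls. i \<noteq> j \<longrightarrow> Ls ! i \<inter> Ls ! j = {}"
    using layering unfolding layering_def by (elim conjE) assumption
  with assms show ?thesis by blast
qed

lemma IAR_adj_consecutive_layers:
  assumes "x \<in> VH" "y \<in> VH" "IAR_adj x y"
  shows "\<exists>i. Suc i < length Ls \<and> (x \<in> Ls ! i \<and> y \<in> Ls ! Suc i \<or> y \<in> Ls ! i \<and> x \<in> Ls ! Suc i)"
proof -
  have "\<forall>x\<in>VH. \<forall>y\<in>VH. IAR_adj x y \<longrightarrow>
      (\<exists>i. Suc i < length Ls \<and> (x \<in> Ls ! i \<and> y \<in> Ls ! Suc i \<or> y \<in> Ls ! i \<and> x \<in> Ls ! Suc i))"
    using layering unfolding layering_def by (elim conjE) assumption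
  with assms show ?thesis by blast
qed

lemma card_lower_layer_nbrs:
  assumes "1 \<le> i" "i < length Ls" "x \<in> Ls ! i"
  shows "card {y \<in> Ls ! (i - 1). IAR_adj x y} = i + 1"
proof -
  have "\<forall>i. 1 \<le> i \<and> i < length Ls \<longrightarrow> (\<forall>x\<in>Ls ! i. card {y \<in> Ls ! (i - 1). IAR_adj x y} = i + 1)"
    using layering unfolding layering_def by (elim conjE) assumption
  with assms show ?thesis by blast
qed

lemma card_common_layer_nbrs:
  assumes "i < length Ls" "x \<in> Ls ! i" "y \<in> Ls ! i" "x \<noteq> y"
  shows "1 \<le> i \<Longrightarrow> card {z \<in> Ls ! (i - 1). IAR_adj x z \<and> IAR_adj y z} \<le> 1"
    and "Suc i < length Ls \<Longrightarrow> card {z \<in> Ls ! Suc i. IAR_adj x z \<and> IAR_adj y z} \<le> 1"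
proof -
  have "\<forall>i<length Ls. \<forall>x\<in>Ls ! i. \<forall>y\<in>Ls ! i. x \<noteq> y \<longrightarrow>
      (1 \<le> i \<longrightarrow> card {z \<in> Ls ! (i - 1). IAR_adj x z \<and> IAR_adj y z} \<le> 1) \<and>
      (Suc i < length Ls \<longrightarrow> card {z \<in> Ls ! Suc i. IAR_adj x z \<and> IAR_adj y z} \<le> 1)"
    using layering unfolding layering_def by (elim conjE) assumption
  with assms show "1 \<le> i \<Longrightarrow> card {z \<in> Ls ! (i - 1). IAR_adj x z \<and> IAR_adj y z} \<le> 1"
    and "Suc i < length Ls \<Longrightarrow> card {z \<in> Ls ! Suc i. IAR_adj x z \<and> IAR_adj y z} \<le> 1"
    by blast+
qed

definition level :: "'a set \<Rightarrow> nat" where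
  "level x = (THE i. i < length Ls \<and> x \<in> Ls ! i)"

lemma level_eq:
  assumes "i < length Ls" "x \<in> Ls ! i"
  shows "level x = i"
  unfolding level_def
proof (rule the_equality)
  show "i < length Ls \<and> x \<in> Ls ! i" using assms ..
  fix j assume "j < length Ls \<and> x \<in> Ls ! j"
  then show "j = i" using layers_disjoint[of i j] assms by blast
qed

lemma level_less_length: "x \<in> VH \<Longrightarrow> level x < length Ls"
  and in_layer_level: "x \<in> VH \<Longrightarrow> x \<in> Ls ! level x"
proof -
  assume "x \<in> VH"
  then obtain L where "L \<in> set Ls" "x \<in> L" using Union_layers by blast
  then obtain i where "i < length Ls" "x \<in> Ls ! i" by (auto simp: in_set_conv_nth)
  then show "level x < length Ls" "x \<in> Ls ! level x" using level_eq by simp_all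
qed

lemma layer_subset: "i < length Ls \<Longrightarrow> Ls ! i \<subseteq> VH"
  using Union_layers nth_mem by blast

lemma layer_eq: "i < length Ls \<Longrightarrow> Ls ! i = {y \<in> VH. level y = i}"
  using layer_subset level_eq in_layer_level by blast

lemma level_IAR_adj:
  assumes "x \<in> VH" "y \<in> VH" "IAR_adj x y"
  shows "level y = Suc (level x) \<or> level x = Suc (level y)"
proof -
  obtain i where "Suc i < length Ls" "x \<in> Ls ! i \<and> y \<in> Ls ! Suc i \<or> y \<in> Ls ! i \<and> x \<in> Ls ! Suc i"
    using IAR_adj_consecutive_layers[OF assms] by blast
  then show ?thesis using level_eq[of i] level_eq[of "Suc i"] by auto
qed

definition lower_nbrs :: "'a set \<Rightarrow> 'a set set" where
  "lower_nbrs x = {y \<in> VH. IAR_adj x y \<and> Suc (level y) = level x}"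

lemma card_lower_nbrs:
  assumes "x \<in> VH" "1 \<le> level x"
  shows "card (lower_nbrs x) = Suc (level x)"
proof -
  have "{y \<in> Ls ! (level x - 1). IAR_adj x y} = lower_nbrs x"
    using layer_eq[of "level x - 1"] level_less_length[OF assms(1)] assms(2)
    unfolding lower_nbrs_def by auto
  then show ?thesis
    using card_lower_layer_nbrs[OF assms(2) level_less_length in_layer_level] assms(1) by simp
qed

text \<open>By condition (4) of a layering, two common neighbours of two vertices of one layer cannot
  lie in the same layer.\<close>

lemma common_nbrs_level_sum:
  assumes "p \<in> VH" "q \<in> VH" "p \<noteq> q" "level p = level q"
    and "r \<in> VH" "u \<in> VH" "r \<noteq> u"
    and "IAR_adj p r" "IAR_adj q r" "IAR_adj p u" "IAR_adj q u"
  shows "level r + level u = 2 * level p"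
proof -
  have r: "level r = Suc (level p) \<or> level p = Suc (level r)"
    using level_IAR_adj[OF assms(1,5,8)] .
  have u: "level u = Suc (level p) \<or> level p = Suc (level u)"
    using level_IAR_adj[OF assms(1,6,10)] .
  have "level r \<noteq> level u"
  proof
    assume same: "level r = level u"
    define j where "j = level r"
    have j: "j < length Ls" "r \<in> Ls ! j" "u \<in> Ls ! j"
      using in_layer_level[OF assms(5)] in_layer_level[OF assms(6)] level_less_length[OF assms(5)] same
      unfolding j_def by simp_all
    have pq: "level p < length Ls" "p \<in> Ls ! level p" "q \<in> Ls ! level p"
      using level_less_length[OF assms(1)] in_layer_level[OF assms(1)] in_layer_level[OF assms(2)] assms(4)
      by simp_all
    have "card {z \<in> Ls ! j. IAR_adj p z \<and> IAR_adj q z} \<le> 1"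
    proof (cases "j = Suc (level p)")
      case True
      then show ?thesis using card_common_layer_nbrs(2)[OF pq assms(3)] j(1) by simp
    next
      case False
      then have "j = level p - 1" "1 \<le> level p" using r unfolding j_def by auto
      then show ?thesis using card_common_layer_nbrs(1)[OF pq assms(3)] by simp
    qed
    moreover have "{r, u} \<subseteq> {z \<in> Ls ! j. IAR_adj p z \<and> IAR_adj q z}"
      using j assms(8-11) by simp
    moreover have "finite {z \<in> Ls ! j. IAR_adj p z \<and> IAR_adj q z}"
      using layer_subset[OF j(1)] by (auto intro: finite_subset[OF _ finite_VH])
    ultimately have "card {r, u} \<le> 1" using card_mono[of _ "{r, u}"] by fastforce
    then show False using assms(7) by simp
  qed
  then show ?thesis using r u by auto
qed

definition vertex_cube :: "'a set \<Rightarrow> ('a set \<Rightarrow> 'a set) \<Rightarrow> bool" where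
  "vertex_cube D \<phi> \<longleftrightarrow> (\<forall>B\<subseteq>D. \<phi> B \<in> VH) \<and> inj_on \<phi> (Pow D) \<and>
     (\<forall>B\<subseteq>D. \<forall>a\<in>D - B. IAR_adj (\<phi> B) (\<phi> (insert a B)))"

lemma level_vertex_cube_square:
  assumes cube: "vertex_cube D \<phi>" and "insert a (insert b B) \<subseteq> D" "a \<notin> B" "b \<notin> B" "a \<noteq> b"
    and same: "level (\<phi> (insert a B)) = level (\<phi> (insert b B))"
  shows "level (\<phi> B) + level (\<phi> (insert a (insert b B))) = 2 * level (\<phi> (insert a B))"
proof -
  have in_VH: "\<phi> C \<in> VH" if "C \<subseteq> D" for C using cube that unfolding vertex_cube_def by blast
  have adj: "IAR_adj (\<phi> C) (\<phi> (insert c C))" if "C \<subseteq> D" "c \<in> D" "c \<notin> C" for C c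
    using cube that unfolding vertex_cube_def by blast
  have sub: "B \<subseteq> D" "insert a B \<subseteq> D" "insert b B \<subseteq> D" "insert a (insert b B) \<subseteq> D"
    using assms(2) by auto
  have "\<phi> (insert a B) \<noteq> \<phi> (insert b B)" "\<phi> B \<noteq> \<phi> (insert a (insert b B))"
    using inj_onD[of \<phi> "Pow D"] cube sub assms(3-5) unfolding vertex_cube_def by (metis PowI insertI1 insert_eq_iff)+
  moreover have "IAR_adj (\<phi> (insert a B)) (\<phi> B)" "IAR_adj (\<phi> (insert b B)) (\<phi> B)"
    using adj[of B a] adj[of B b] sub assms(3,4) IAR_adj_symI by auto
  moreover have "IAR_adj (\<phi> (insert a B)) (\<phi> (insert a (insert b B)))"
    "IAR_adj (\<phi> (insert b B)) (\<phi> (insert a (insert b B)))"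
    using adj[of "insert a B" b] adj[of "insert b B" a] sub assms(3-5) by (auto simp: insert_commute)
  ultimately show ?thesis
    using common_nbrs_level_sum[OF in_VH[OF sub(2)] in_VH[OF sub(3)] _ same in_VH[OF sub(1)] in_VH[OF sub(4)]]
    by simp
qed

lemma level_vertex_cube:
  fixes \<delta> :: int
  assumes cube: "vertex_cube D \<phi>" and "finite D"
    and edge: "\<And>a. a \<in> D \<Longrightarrow> int (level (\<phi> {a})) = int (level (\<phi> {})) + \<delta>"
  shows "B \<subseteq> D \<Longrightarrow> int (level (\<phi> B)) = int (level (\<phi> {})) + \<delta> * int (card B)"
proof (induction "card B" arbitrary: B rule: less_induct)
  case less
  have "finite B" using finite_subset[OF less.prems \<open>finite D\<close>] .
  show ?case
  proof (cases "card B \<le> 1")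
    case True
    show ?thesis
    proof (cases "B = {}")
      case False
      then have "card B = 1" using True \<open>finite B\<close> by (simp add: le_Suc_eq)
      then obtain a where "B = {a}" by (rule card_1_singletonE)
      then show ?thesis using edge less.prems by simp
    qed simp
  next
    case False
    then obtain a b where ab: "a \<in> B" "b \<in> B" "a \<noteq> b"
      using card_le_Suc0_iff_eq[OF \<open>finite B\<close>] by auto
    define B0 where "B0 = B - {a, b}"
    have B: "B = insert a (insert b B0)" "a \<notin> B0" "b \<notin> B0" using ab unfolding B0_def by auto
    have card: "card B = Suc (Suc (card B0))" "card (insert a B0) = Suc (card B0)"
      "card (insert b B0) = Suc (card B0)"
      using B \<open>finite B\<close> ab(3) by (simp_all add: card_insert_if)
    have IH: "int (level (\<phi> C)) = int (level (\<phi> {})) + \<delta> * int (card C)"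
      if "C \<in> {B0, insert a B0, insert b B0}" for C
      using less.hyps[of C] that less.prems card B(1) by auto
    have IH_a: "int (level (\<phi> (insert a B0))) = int (level (\<phi> {})) + \<delta> * (int (card B0) + 1)"
      and IH_b: "int (level (\<phi> (insert b B0))) = int (level (\<phi> {})) + \<delta> * (int (card B0) + 1)"
      using IH[of "insert a B0"] IH[of "insert b B0"] card by simp_all
    then have "level (\<phi> (insert a B0)) = level (\<phi> (insert b B0))" by simp
    then have "level (\<phi> B0) + level (\<phi> B) = 2 * level (\<phi> (insert a B0))"
      using level_vertex_cube_square[OF cube] less.prems B ab(3) by simp
    then have "int (level (\<phi> B0)) + int (level (\<phi> B)) = 2 * int (level (\<phi> (insert a B0)))"
      by (metis of_nat_add of_nat_mult of_nat_numeral)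
    then show ?thesis using IH[of B0] IH_a card by (simp add: algebra_simps)
  qed
qed

lemma level_union_cube:
  assumes F: "F \<in> VH" and "finite A" "A \<inter> F = {}" and FA: "F \<union> A \<in> VH"
    and edge: "\<And>a. a \<in> A \<Longrightarrow> int (level (insert a F)) = int (level F) + \<delta>"
    and "B \<subseteq> A"
  shows "int (level (F \<union> B)) = int (level F) + \<delta> * int (card B)"
proof -
  have "vertex_cube A (\<lambda>B. F \<union> B)"
    unfolding vertex_cube_def
  proof (intro conjI ballI allI impI)
    show "F \<union> C \<in> VH" if "C \<subseteq> A" for C
      by (rule VH_subset[OF FA]) (use that VH_nonempty[OF F] in auto)
    show "inj_on ((\<union>) F) (Pow A)" using \<open>A \<inter> F = {}\<close> by (auto intro!: inj_onI)
    show "IAR_adj (F \<union> C) (F \<union> insert a C)" if "C \<subseteq> A" "a \<in> A - C" for C a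
      using IAR_adj_insertI[of a "F \<union> C"] that \<open>A \<inter> F = {}\<close> by auto
  qed
  from level_vertex_cube[OF this \<open>finite A\<close> _ \<open>B \<subseteq> A\<close>] show ?thesis using edge by simp
qed

lemma level_diff_cube:
  assumes X: "X \<in> VH" and "R \<subseteq> X" and "X - R \<noteq> {}"
    and edge: "\<And>a. a \<in> R \<Longrightarrow> int (level (X - {a})) = int (level X) + \<delta>"
    and "B \<subseteq> R"
  shows "int (level (X - B)) = int (level X) + \<delta> * int (card B)"
proof -
  have "vertex_cube R (\<lambda>B. X - B)"
    unfolding vertex_cube_def
  proof (intro conjI ballI allI impI)
    show "X - C \<in> VH" if "C \<subseteq> R" for C
      by (rule VH_subset[OF X]) (use that \<open>X - R \<noteq> {}\<close> in auto)
    show "inj_on ((-) X) (Pow R)" using \<open>R \<subseteq> X\<close> by (auto intro!: inj_onI)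
    show "IAR_adj (X - C) (X - insert a C)" if "C \<subseteq> R" "a \<in> R - C" for C a
    proof -
      have "a \<in> X - C" "X - insert a C = X - C - {a}" using that \<open>R \<subseteq> X\<close> by auto
      then show ?thesis using IAR_adj_removeI[of a "X - C"] by simp
    qed
  qed
  moreover have "finite R" using finite_subset[OF \<open>R \<subseteq> X\<close> VH_finite[OF X]] .
  ultimately show ?thesis using level_vertex_cube[of R _ \<delta> B] edge \<open>B \<subseteq> R\<close> by simp
qed

lemma level_0_IAR_adj:
  assumes "x \<in> VH" "y \<in> VH" "IAR_adj x y" "level x = 0"
  shows "level y = 1"
  using level_IAR_adj[OF assms(1-3)] assms(4) by simp

lemma level_singleton_of_bottom:
  assumes X: "X \<in> VH" and "level X = 0" and "a \<in> X"
  shows "level {a} = card X - 1"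
proof -
  have "int (level (X - (X - {a}))) = int (level X) + 1 * int (card (X - {a}))"
  proof (rule level_diff_cube[OF X _ _ _ subset_refl])
    show "X - {a} \<subseteq> X" "X - (X - {a}) \<noteq> {}" using \<open>a \<in> X\<close> by auto
    fix c assume c: "c \<in> X - {a}"
    have "X - {c} \<in> VH" by (rule VH_subset[OF X]) (use \<open>a \<in> X\<close> c in auto)
    then have "level (X - {c}) = 1"
      using level_0_IAR_adj[OF X _ IAR_adj_removeI \<open>level X = 0\<close>] c by simp
    then show "int (level (X - {c})) = int (level X) + 1" using \<open>level X = 0\<close> by simp
  qed
  moreover have "X - (X - {a}) = {a}" using \<open>a \<in> X\<close> by auto
  ultimately show ?thesis using \<open>a \<in> X\<close> VH_finite[OF X] \<open>level X = 0\<close> by simp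
qed

lemma level_common_nbr_above_bottom:
  assumes S: "S \<in> VH" "level S = 0" and pq: "p \<in> VH" "q \<in> VH" "p \<noteq> q" "IAR_adj S p" "IAR_adj S q"
    and u: "u \<in> VH" "u \<noteq> S" "IAR_adj p u" "IAR_adj q u"
  shows "level u = 2"
proof -
  have "level p = 1" "level q = 1" using level_0_IAR_adj S pq by blast+
  then show ?thesis
    using common_nbrs_level_sum[OF pq(1-3) _ S(1) u(1) u(2)[symmetric] IAR_adj_symI[OF pq(4)]
        IAR_adj_symI[OF pq(5)] u(3,4)] S(2) by simp
qed

lemma bottom_not_extensible:
  assumes S: "S \<in> VH" "level S = 0" and "2 \<le> card S" and "b \<notin> S"
  shows "insert b S \<notin> VH"
proof
  define T where "T = insert b S"
  assume "insert b S \<in> VH"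
  then have T: "T \<in> VH" "IAR_adj S T" using IAR_adj_insertI[OF \<open>b \<notin> S\<close>] unfolding T_def by auto
  have level_T: "level T = 1" using level_0_IAR_adj[OF S(1) T S(2)] .
  have level_swap: "level (insert b (S - {a})) = 2" if "a \<in> S" for a
  proof (rule level_common_nbr_above_bottom[OF S VH_remove[OF S(1) \<open>2 \<le> card S\<close>] T(1)])
    have "a \<noteq> b" using that \<open>b \<notin> S\<close> by auto
    then show "IAR_adj (S - {a}) (insert b (S - {a}))" "IAR_adj T (insert b (S - {a}))"
      using IAR_adj_insertI[of b "S - {a}"] IAR_adj_removeI[of a T] \<open>b \<notin> S\<close> that
      by (auto simp: T_def insert_Diff_if)
    show "insert b (S - {a}) \<in> VH" by (rule VH_subset[OF T(1)]) (auto simp: T_def)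
  qed (use that \<open>b \<notin> S\<close> IAR_adj_removeI T(2) in \<open>auto simp: T_def\<close>)
  have "card (lower_nbrs T) = 2" using card_lower_nbrs[OF T(1)] level_T by simp
  moreover have "S \<in> lower_nbrs T"
    using S T level_T IAR_adj_symI unfolding lower_nbrs_def by simp
  ultimately have "lower_nbrs T \<noteq> {S}" by auto
  with \<open>S \<in> lower_nbrs T\<close> obtain y where y: "y \<in> lower_nbrs T" "y \<noteq> S" by blast
  then have y': "y \<in> VH" "IAR_adj T y" "level y = 0" using level_T unfolding lower_nbrs_def by auto
  from y'(2) show False
  proof (cases rule: IAR_adjE)
    case (1 c)
    then show False using y y' level_swap \<open>b \<notin> S\<close> unfolding T_def
      by (cases "c = b") (auto simp: insert_Diff_if)
  next
    case (2 t)
    have "insert t S \<in> VH" "IAR_adj S (insert t S)" "IAR_adj (insert t S) y" "T \<noteq> insert t S"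
      using VH_subset[OF y'(1), of "insert t S"] IAR_adj_insertI[of t S] IAR_adj_insertI[of b "insert t S"]
        2 \<open>b \<notin> S\<close> unfolding T_def by (auto simp: insert_commute)
    then have "level y = 2"
      using level_common_nbr_above_bottom[OF S T(1) _ _ T(2) _ y'(1) y(2) y'(2)] by simp
    then show False using y'(3) by simp
  qed
qed

lemma insertions_forced_by_lower_nbrs:
  assumes P: "P \<in> VH" "1 \<le> level P"
    and "finite R" "finite T" "card R + card T \<le> Suc (level P)"
    and lower: "\<And>y. y \<in> lower_nbrs P \<Longrightarrow> y \<in> R \<or> (\<exists>t\<in>T. y = insert t P)"
    and "t \<in> T"
  shows "insert t P \<in> VH"
proof -
  define T' where "T' = {t \<in> T. insert t P \<in> VH}"
  have "lower_nbrs P \<subseteq> R \<union> (\<lambda>t. insert t P) ` T'"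
  proof
    fix y assume y: "y \<in> lower_nbrs P"
    then have "y \<in> VH" unfolding lower_nbrs_def by simp
    with lower[OF y] show "y \<in> R \<union> (\<lambda>t. insert t P) ` T'" unfolding T'_def by blast
  qed
  have "finite T'" using \<open>finite T\<close> unfolding T'_def by simp
  have "card (lower_nbrs P) \<le> card (R \<union> (\<lambda>t. insert t P) ` T')"
    using \<open>finite R\<close> \<open>finite T'\<close> by (intro card_mono[OF _ \<open>lower_nbrs P \<subseteq> _\<close>]) simp
  also have "\<dots> \<le> card R + card ((\<lambda>t. insert t P) ` T')" by (rule card_Un_le)
  also have "\<dots> \<le> card R + card T'" using card_image_le[OF \<open>finite T'\<close>] by simp
  finally have "card T \<le> card T'" using card_lower_nbrs[OF P] assms(5) by simp
  moreover have "T' \<subseteq> T" unfolding T'_def by blast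
  ultimately have "T' = T" using card_seteq[OF \<open>finite T\<close>] by blast
  then show ?thesis using \<open>t \<in> T\<close> unfolding T'_def by blast
qed

section \<open>The defect\<close>

text \<open>Layers are indexed from 0, so \<open>defect x = 0\<close> says that \<open>x\<close> lies in the layer it occupies
  in the layering by size.\<close>

definition defect :: "'a set \<Rightarrow> int" where
  "defect x = int (level x) + 1 - int (card x)"

definition max_defect :: int where "max_defect = Max (defect ` VH)"

definition min_defect :: int where "min_defect = Min (defect ` VH)"

lemma defect_le_max: "x \<in> VH \<Longrightarrow> defect x \<le> max_defect"
  unfolding max_defect_def using finite_VH by simp

lemma min_le_defect: "x \<in> VH \<Longrightarrow> min_defect \<le> defect x"
  unfolding min_defect_def using finite_VH by simp

lemma max_defect_attained:
  assumes "VH \<noteq> {}" obtains x where "x \<in> VH" "defect x = max_defect"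
proof -
  have "max_defect \<in> defect ` VH"
    unfolding max_defect_def using finite_VH assms by (intro Max_in) auto
  then obtain x where "x \<in> VH" "max_defect = defect x" by (rule imageE)
  with that show ?thesis by simp
qed

lemma min_defect_attained:
  assumes "VH \<noteq> {}" obtains x where "x \<in> VH" "defect x = min_defect"
proof -
  have "min_defect \<in> defect ` VH"
    unfolding min_defect_def using finite_VH assms by (intro Min_in) auto
  then obtain x where "x \<in> VH" "min_defect = defect x" by (rule imageE)
  with that show ?thesis by simp
qed

lemma card_IAR_adj:
  assumes "x \<in> VH" "IAR_adj x y"
  shows "int (card y) = int (card x) + 1 \<or> int (card y) = int (card x) - 1"
  using IAR_adj_card[OF VH_finite[OF assms(1)] assms(2)] by auto

lemma even_defect_IAR_adj:
  assumes "x \<in> VH" "y \<in> VH" "IAR_adj x y"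
  shows "even (defect y) \<longleftrightarrow> even (defect x)"
proof -
  have "int (level y) = int (level x) + 1 \<or> int (level y) = int (level x) - 1"
    using level_IAR_adj[OF assms] by auto
  then have "defect y = defect x - 2 \<or> defect y = defect x \<or> defect y = defect x + 2"
    using card_IAR_adj[OF assms(1,3)] unfolding defect_def by auto
  then show ?thesis by auto
qed

lemma bottom_subset_of_min_defect:
  assumes "x \<in> VH" "defect x = min_defect"
  obtains z where "z \<in> VH" "z \<subseteq> x" "defect z = min_defect" "level z = 0"
proof -
  let ?Y = "{z \<in> VH. z \<subseteq> x \<and> defect z = min_defect}"
  obtain z where z: "z \<in> ?Y" and z_min: "\<And>y. y \<in> ?Y \<Longrightarrow> card z \<le> card y"
    using ex_has_least_nat[of "\<lambda>z. z \<in> ?Y" x card] assms by auto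
  have "level z = 0"
  proof (rule ccontr)
    assume "level z \<noteq> 0"
    then have "card (lower_nbrs z) = Suc (level z)" using card_lower_nbrs z by simp
    then obtain y where y: "y \<in> lower_nbrs z" by fastforce
    then have y': "y \<in> VH" "IAR_adj z y" "Suc (level y) = level z" unfolding lower_nbrs_def by auto
    from y'(2) show False
    proof (cases rule: IAR_adjE)
      case (1 a)
      have "Suc (card y) = card z"
        using 1 card_Suc_Diff1[OF VH_finite] z by simp
      then have "y \<in> ?Y" "card y < card z"
        using z y' 1 by (auto simp: defect_def)
      then show False using z_min by fastforce
    next
      case (2 b)
      then have "defect y = min_defect - 2"
        using z y' VH_finite[of z] by (auto simp: defect_def)
      then show False using min_le_defect[OF y'(1)] by simp
    qed
  qed
  with z that show ?thesis by blast
qed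

lemma negative_min_defect:
  assumes neg: "min_defect \<le> -1" and x: "x \<in> VH" "defect x = min_defect"
  shows "level x = 0" "int (card x) = 1 - min_defect" "\<And>t. t \<notin> x \<Longrightarrow> insert t x \<notin> VH"
proof -
  obtain z where z: "z \<in> VH" "z \<subseteq> x" "defect z = min_defect" "level z = 0"
    using bottom_subset_of_min_defect[OF x] .
  have card_z: "int (card z) = 1 - min_defect" using z(3,4) unfolding defect_def by simp
  then have "2 \<le> card z" using neg by simp
  have "z = x"
  proof (rule ccontr)
    assume "z \<noteq> x"
    then obtain b where "b \<in> x" "b \<notin> z" using z(2) by blast
    moreover have "insert b z \<in> VH" by (rule VH_subset[OF x(1)]) (use \<open>b \<in> x\<close> z(2) in auto)
    ultimately show False using bottom_not_extensible[OF z(1,4) \<open>2 \<le> card z\<close>] by blast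
  qed
  then show "level x = 0" "int (card x) = 1 - min_defect" using z(4) card_z by simp_all
  show "insert t x \<notin> VH" if "t \<notin> x" for t
    using bottom_not_extensible[OF z(1,4) \<open>2 \<le> card z\<close>] that \<open>z = x\<close> by blast
qed

lemma neg_min_defect_le_max_defect:
  assumes "min_defect \<le> -1" "VH \<noteq> {}"
  shows "- min_defect \<le> max_defect"
proof -
  obtain x where x: "x \<in> VH" "defect x = min_defect" using min_defect_attained[OF assms(2)] .
  obtain v where "v \<in> x" using VH_nonempty[OF x(1)] by blast
  have "level {v} = card x - 1" using level_singleton_of_bottom[OF x(1) negative_min_defect(1)[OF assms(1) x] \<open>v \<in> x\<close>] .
  moreover have "{v} \<in> VH" by (rule VH_subset[OF x(1)]) (use \<open>v \<in> x\<close> in auto)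
  ultimately show ?thesis
    using defect_le_max[of "{v}"] negative_min_defect(2)[OF assms(1) x] VH_card_pos[OF x(1)]
    unfolding defect_def by simp
qed

lemma level_insert_of_max_defect:
  assumes x: "x \<in> VH" "defect x = max_defect" and b: "b \<notin> x" "insert b x \<in> VH"
    and "defect (insert b x) \<noteq> max_defect"
  shows "Suc (level (insert b x)) = level x"
proof -
  have "level (insert b x) \<noteq> Suc (level x)"
    using assms VH_finite[OF x(1)] unfolding defect_def by auto
  then show ?thesis using level_IAR_adj[OF x(1) b(2) IAR_adj_insertI[OF b(1)]] by simp
qed

lemma level_remove_of_max_defect:
  assumes x: "x \<in> VH" "defect x = max_defect" and "a \<in> x" "2 \<le> card x"
  shows "Suc (level (x - {a})) = level x"
proof -
  have "x - {a} \<in> VH" using VH_remove[OF x(1) \<open>2 \<le> card x\<close>] .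
  moreover have "int (card (x - {a})) = int (card x) - 1"
    using \<open>a \<in> x\<close> \<open>2 \<le> card x\<close> by simp
  ultimately have "level (x - {a}) \<noteq> Suc (level x)"
    using defect_le_max[of "x - {a}"] x(2) unfolding defect_def by auto
  then show ?thesis
    using level_IAR_adj[OF x(1) \<open>x - {a} \<in> VH\<close> IAR_adj_removeI[OF \<open>a \<in> x\<close>]] by simp
qed

definition extensions :: "'a set \<Rightarrow> 'a set" where
  "extensions x = {b. b \<notin> x \<and> insert b x \<in> VH}"

lemma finite_extensions: "finite (extensions x)"
  by (rule finite_subset[OF _ finite_V]) (auto simp: extensions_def dest: VH_subset_V)

lemma IAR_nbrs_eq:
  assumes "x \<in> VH" "2 \<le> card x"
  shows "{y \<in> VH. IAR_adj x y} = (\<lambda>a. x - {a}) ` x \<union> (\<lambda>b. insert b x) ` extensions x"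
proof (intro equalityI subsetI)
  fix y assume "y \<in> {y \<in> VH. IAR_adj x y}"
  then have "y \<in> VH" "IAR_adj x y" by auto
  from this(2) show "y \<in> (\<lambda>a. x - {a}) ` x \<union> (\<lambda>b. insert b x) ` extensions x"
    by (cases rule: IAR_adjE) (use \<open>y \<in> VH\<close> in \<open>auto simp: extensions_def\<close>)
next
  fix y assume "y \<in> (\<lambda>a. x - {a}) ` x \<union> (\<lambda>b. insert b x) ` extensions x"
  then show "y \<in> {y \<in> VH. IAR_adj x y}"
    using VH_remove[OF assms] IAR_adj_removeI IAR_adj_insertI by (auto simp: extensions_def)
qed

lemma card_IAR_nbrs:
  assumes "x \<in> VH" "2 \<le> card x"
  shows "card {y \<in> VH. IAR_adj x y} = card x + card (extensions x)"
proof -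
  have "inj_on (\<lambda>a. x - {a}) x" "inj_on (\<lambda>b. insert b x) (extensions x)"
    by (auto intro!: inj_onI simp: extensions_def)
  moreover have "(\<lambda>a. x - {a}) ` x \<inter> (\<lambda>b. insert b x) ` extensions x = {}" by auto
  ultimately show ?thesis
    unfolding IAR_nbrs_eq[OF assms] using VH_finite[OF assms(1)] finite_extensions
    by (simp add: card_Un_disjoint card_image)
qed

lemma IAR_nbrs_singleton:
  assumes "{v} \<in> VH"
  shows "{y \<in> VH. IAR_adj {v} y} = (\<lambda>b. insert b {v}) ` extensions {v}"
proof (intro equalityI subsetI)
  fix y assume "y \<in> {y \<in> VH. IAR_adj {v} y}"
  then have "y \<in> VH" "IAR_adj {v} y" by auto
  from this(2) show "y \<in> (\<lambda>b. insert b {v}) ` extensions {v}"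
    by (cases rule: IAR_adjE) (use \<open>y \<in> VH\<close> VH_nonempty in \<open>auto simp: extensions_def\<close>)
qed (auto simp: extensions_def intro: IAR_adj_insertI)

lemma card_IAR_nbrs_singleton:
  assumes "{v} \<in> VH"
  shows "card {y \<in> VH. IAR_adj {v} y} = card (extensions {v})"
proof -
  have "inj_on (\<lambda>b. insert b {v}) (extensions {v})"
    by (auto intro!: inj_onI simp: extensions_def)
  then show ?thesis unfolding IAR_nbrs_singleton[OF assms] by (rule card_image)
qed

lemma union_in_VH_if_pairwise:
  assumes x: "x \<in> VH"
    and single: "\<And>w. w \<in> W \<Longrightarrow> insert w x \<in> VH"
    and pair: "\<And>w w'. w \<in> W \<Longrightarrow> w' \<in> W \<Longrightarrow> w \<noteq> w' \<Longrightarrow> insert w' (insert w x) \<in> VH"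
  shows "x \<union> W \<in> VH"
proof -
  have covered: "\<exists>S. S \<in> VH \<and> p \<in> S \<and> q \<in> S" if pq: "p \<in> x \<union> W" "q \<in> x \<union> W" for p q
  proof (cases "p \<in> W \<and> q \<in> W \<and> p \<noteq> q")
    case True
    then show ?thesis using pair[of p q] by (intro exI[of _ "insert q (insert p x)"]) simp
  next
    case False
    then consider "p \<in> x" "q \<in> x" | "p \<in> W" "q \<in> x \<union> {p}" | "q \<in> W" "p \<in> x \<union> {q}"
      using pq by blast
    then show ?thesis
    proof cases
      case 1 then show ?thesis using x by blast
    next
      case 2 then show ?thesis using single[of p] by (intro exI[of _ "insert p x"]) auto
    next
      case 3 then show ?thesis using single[of q] by (intro exI[of _ "insert q x"]) auto
    qed
  qed
  have "x \<union> W \<subseteq> V" using VH_subset_V[OF x] VH_subset_V[OF single] by blast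
  moreover have "x \<union> W \<noteq> {}" using VH_nonempty[OF x] by blast
  moreover have "\<not> E p q" if "p \<in> x \<union> W" "q \<in> x \<union> W" for p q
    using covered[OF that] VH_iff by blast
  ultimately show ?thesis using VH_iff by blast
qed

end

locale max_defect_saturated = IAR_layering +
  fixes x :: "'a set"
  assumes x_in_VH: "x \<in> VH" and defect_x: "defect x = max_defect" and card_x: "2 \<le> card x"
    and saturated: "\<And>b. b \<notin> x \<Longrightarrow> insert b x \<in> VH \<Longrightarrow> defect (insert b x) \<noteq> max_defect"
begin

abbreviation W :: "'a set" where "W \<equiv> extensions x"

lemma extension: "w \<in> W \<Longrightarrow> w \<notin> x \<and> insert w x \<in> VH"
  unfolding extensions_def by simp

lemma level_x: "int (level x) = max_defect + int (card x) - 1"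
  using defect_x unfolding defect_def by simp

lemma level_remove: "a \<in> x \<Longrightarrow> Suc (level (x - {a})) = level x"
  using level_remove_of_max_defect[OF x_in_VH defect_x _ card_x] .

lemma level_insert: "w \<in> W \<Longrightarrow> Suc (level (insert w x)) = level x"
  using level_insert_of_max_defect[OF x_in_VH defect_x] extension saturated by blast

lemma level_x_pos: "1 \<le> level x"
proof -
  obtain a where "a \<in> x" using card_x by fastforce
  then show ?thesis using level_remove by fastforce
qed

lemma card_W: "int (card W) = max_defect"
proof -
  have "lower_nbrs x = {y \<in> VH. IAR_adj x y}"
  proof (intro equalityI subsetI)
    fix y assume "y \<in> {y \<in> VH. IAR_adj x y}"
    then have "y \<in> VH" "IAR_adj x y" "y \<in> (\<lambda>a. x - {a}) ` x \<union> (\<lambda>b. insert b x) ` W"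
      using IAR_nbrs_eq[OF x_in_VH card_x] by auto
    then show "y \<in> lower_nbrs x" using level_remove level_insert unfolding lower_nbrs_def by auto
  qed (auto simp: lower_nbrs_def)
  then have "card x + card W = Suc (level x)"
    using card_lower_nbrs[OF x_in_VH level_x_pos] card_IAR_nbrs[OF x_in_VH card_x] by simp
  then show ?thesis using level_x by simp
qed

text \<open>The \<open>level x\<close> lower neighbours of \<open>insert w x\<close> are among the \<open>card x\<close> sets
  \<open>insert w (x - {a})\<close> and the sets \<open>insert w' (insert w x)\<close> with \<open>w' \<in> W - {w}\<close>, and there
  are just as many candidates as lower neighbours.\<close>

lemma insert_insert_in_VH:
  assumes "w \<in> W" "w' \<in> W" "w \<noteq> w'"
  shows "insert w' (insert w x) \<in> VH"
proof (rule insertions_forced_by_lower_nbrs)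
  have w: "w \<notin> x" "insert w x \<in> VH" using extension[OF assms(1)] by auto
  have "0 < card W" using assms(1) finite_extensions by (auto simp: card_gt_0_iff)
  then have card_W_w: "int (card (W - {w})) = max_defect - 1" using card_W assms(1) by simp
  show "insert w x \<in> VH" by (fact w(2))
  show "1 \<le> level (insert w x)"
    using level_insert[OF assms(1)] level_x card_x card_W \<open>0 < card W\<close> by simp
  show "finite ((\<lambda>a. insert w (x - {a})) ` x)" "finite (W - {w})"
    using VH_finite[OF x_in_VH] finite_extensions by simp_all
  have "card ((\<lambda>a. insert w (x - {a})) ` x) \<le> card x" by (rule card_image_le[OF VH_finite[OF x_in_VH]])
  then show "card ((\<lambda>a. insert w (x - {a})) ` x) + card (W - {w}) \<le> Suc (level (insert w x))"
    using level_insert[OF assms(1)] level_x card_W_w by simp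
  show "w' \<in> W - {w}" using assms by simp
  fix y assume "y \<in> lower_nbrs (insert w x)"
  then have y: "y \<in> VH" "IAR_adj (insert w x) y" "Suc (level y) = level (insert w x)"
    unfolding lower_nbrs_def by auto
  from y(2) show "y \<in> (\<lambda>a. insert w (x - {a})) ` x \<or> (\<exists>t\<in>W - {w}. y = insert t (insert w x))"
  proof (cases rule: IAR_adjE)
    case (1 c)
    then show ?thesis using level_insert[OF assms(1)] y(3) w(1) by (cases "c = w") auto
  next
    case (2 t)
    have "insert t x \<in> VH" by (rule VH_subset[OF y(1)]) (use 2 in auto)
    then show ?thesis using 2 by (auto simp: extensions_def)
  qed
qed

lemma union_W_in_VH: "x \<union> W \<in> VH"
  by (rule union_in_VH_if_pairwise[OF x_in_VH]) (use extension insert_insert_in_VH in auto)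

lemma level_union_subset_W:
  assumes "B \<subseteq> W"
  shows "int (level (x \<union> B)) = int (level x) - int (card B)"
proof -
  have "int (level (x \<union> B)) = int (level x) + (-1) * int (card B)"
    by (rule level_union_cube[OF x_in_VH finite_extensions _ union_W_in_VH _ assms])
      (use extension level_insert in \<open>force+\<close>)
  then show ?thesis by simp
qed

lemma level_union_W: "int (level (x \<union> W)) = int (card x) - 1"
  using level_union_subset_W[OF subset_refl] level_x card_W by simp

lemma union_W_not_extensible:
  assumes "t \<notin> x \<union> W"
  shows "insert t (x \<union> W) \<notin> VH"
proof
  assume "insert t (x \<union> W) \<in> VH"
  then have "insert t x \<in> VH" by (rule VH_subset) auto
  then show False using assms by (simp add: extensions_def)
qed

lemma lower_nbrs_union_W: "lower_nbrs (x \<union> W) \<subseteq> (\<lambda>a. x \<union> W - {a}) ` x"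
proof
  fix y assume "y \<in> lower_nbrs (x \<union> W)"
  then have y: "y \<in> VH" "IAR_adj (x \<union> W) y" "Suc (level y) = level (x \<union> W)"
    by (auto simp: lower_nbrs_def)
  from y(2) show "y \<in> (\<lambda>a. x \<union> W - {a}) ` x"
  proof (cases rule: IAR_adjE)
    case (1 c)
    show ?thesis
    proof (cases "c \<in> x")
      case False
      then have "c \<in> W" "y = x \<union> (W - {c})" using 1 by auto
      moreover have "0 < card W" using \<open>c \<in> W\<close> finite_extensions by (auto simp: card_gt_0_iff)
      ultimately have "int (level y) = int (level x) - (int (card W) - 1)"
        using level_union_subset_W[of "W - {c}"] by (simp add: of_nat_diff)
      then show ?thesis using y(3) level_union_W level_x card_W by simp
    qed (use 1 in blast)
  next
    case (2 b)
    then show ?thesis using union_W_not_extensible y(1) by auto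
  qed
qed

text \<open>Otherwise \<open>W \<noteq> {}\<close>, the lower neighbours of the vertex \<open>x \<union> W\<close> are the sets
  \<open>x \<union> W - {a}\<close> with \<open>a \<in> x\<close>, and removing all of \<open>x\<close> would lead below the bottom layer.\<close>

theorem max_defect_nonpos: "max_defect \<le> 0"
proof (rule ccontr)
  assume "\<not> max_defect \<le> 0"
  then have "W \<noteq> {}" using card_W by auto
  let ?Z = "x \<union> W"
  have Z: "?Z \<in> VH" "1 \<le> level ?Z" using union_W_in_VH level_union_W card_x by auto
  have "finite ((\<lambda>a. ?Z - {a}) ` x)" using VH_finite[OF x_in_VH] by simp
  moreover have "Suc (level ?Z) = card x" using level_union_W card_x by linarith
  then have "card ((\<lambda>a. ?Z - {a}) ` x) \<le> card (lower_nbrs ?Z)"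
    using card_image_le[OF VH_finite[OF x_in_VH]] card_lower_nbrs[OF Z] by simp
  ultimately have lower: "lower_nbrs ?Z = (\<lambda>a. ?Z - {a}) ` x"
    using card_seteq lower_nbrs_union_W by blast
  have "int (level (?Z - x)) = int (level ?Z) + (-1) * int (card x)"
  proof (rule level_diff_cube[OF Z(1) _ _ _ subset_refl])
    show "x \<subseteq> ?Z" "?Z - x \<noteq> {}" using \<open>W \<noteq> {}\<close> extension by auto
    fix a assume "a \<in> x"
    then have "?Z - {a} \<in> lower_nbrs ?Z" using lower by blast
    then show "int (level (?Z - {a})) = int (level ?Z) + - 1" by (auto simp: lower_nbrs_def)
  qed
  then show False using level_union_W by simp
qed

end

context IAR_layering
begin

lemma card_of_max_defect:
  assumes x: "x \<in> VH" "defect x = max_defect" and "0 < max_defect"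
  shows "card x = 1"
proof -
  let ?Y = "{z \<in> VH. defect z = max_defect \<and> x \<subseteq> z}"
  obtain y where y: "y \<in> ?Y" and y_max: "\<And>z. z \<in> ?Y \<Longrightarrow> card z \<le> card y"
    using ex_max_card[of ?Y x] finite_VH x by auto
  have "\<not> 2 \<le> card y"
  proof
    assume "2 \<le> card y"
    have "max_defect_saturated V E Ls y"
    proof (unfold_locales)
      show "y \<in> VH" "defect y = max_defect" using y by auto
      show "2 \<le> card y" by fact
      fix b assume b: "b \<notin> y" "insert b y \<in> VH"
      show "defect (insert b y) \<noteq> max_defect"
      proof
        assume "defect (insert b y) = max_defect"
        then have "card (insert b y) \<le> card y" using y b by (intro y_max) auto
        then show False using b VH_finite[of y] y by simp
      qed
    qed
    then show False using max_defect_saturated.max_defect_nonpos \<open>0 < max_defect\<close> by fastforce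
  qed
  moreover have "card x \<le> card y" using y VH_finite by (auto intro: card_mono)
  ultimately show ?thesis using VH_card_pos[OF x(1)] by linarith
qed

end

locale max_defect_singleton = IAR_layering +
  fixes v :: 'a
  assumes v_in_VH: "{v} \<in> VH" and defect_v: "defect {v} = max_defect" and max_defect_pos: "0 < max_defect"
begin

abbreviation W :: "'a set" where "W \<equiv> extensions {v}"

lemma extension: "w \<in> W \<Longrightarrow> w \<noteq> v \<and> insert w {v} \<in> VH"
  unfolding extensions_def by simp

lemma level_v: "int (level {v}) = max_defect"
  using defect_v unfolding defect_def by simp

lemma level_insert:
  assumes "w \<in> W"
  shows "Suc (level (insert w {v})) = level {v}"
proof -
  have w: "w \<notin> {v}" "insert w {v} \<in> VH" using extension[OF assms] by auto
  then have "defect (insert w {v}) \<noteq> max_defect"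
    using card_of_max_defect[OF w(2) _ max_defect_pos] by auto
  then show ?thesis using level_insert_of_max_defect[OF v_in_VH defect_v w] by simp
qed

lemma lower_nbrs_v: "lower_nbrs {v} = {y \<in> VH. IAR_adj {v} y}"
proof (intro equalityI subsetI)
  fix y assume "y \<in> {y \<in> VH. IAR_adj {v} y}"
  then have "y \<in> VH" "IAR_adj {v} y" "y \<in> (\<lambda>b. insert b {v}) ` W"
    using IAR_nbrs_singleton[OF v_in_VH] by auto
  then show "y \<in> lower_nbrs {v}" using level_insert unfolding lower_nbrs_def by auto
qed (auto simp: lower_nbrs_def)

lemma card_W: "int (card W) = max_defect + 1"
  using card_lower_nbrs[OF v_in_VH] level_v max_defect_pos card_IAR_nbrs_singleton[OF v_in_VH] lower_nbrs_v
  by simp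

lemma level_insert_subset:
  assumes "A \<subseteq> W" "insert v A \<in> VH"
  shows "int (level (insert v A)) = max_defect - int (card A)"
proof -
  have "finite A" using finite_subset[OF assms(1) finite_extensions] .
  have "int (level ({v} \<union> A)) = int (level {v}) + (-1) * int (card A)"
    by (rule level_union_cube[OF v_in_VH \<open>finite A\<close> _ _ _ subset_refl])
      (use assms extension level_insert in \<open>force+\<close>)
  then show ?thesis using level_v by simp
qed

lemma level_maximal_insert_subset:
  assumes A: "A \<subseteq> W" "insert v A \<in> VH"
    and maximal: "\<And>t. t \<notin> insert v A \<Longrightarrow> insert t (insert v A) \<notin> VH"
  shows "level (insert v A) = 0"
proof (rule ccontr)
  let ?X = "insert v A"
  assume "level ?X \<noteq> 0"
  then have "card (lower_nbrs ?X) = Suc (level ?X)" "1 \<le> level ?X"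
    using card_lower_nbrs[OF A(2)] by auto
  moreover have "lower_nbrs ?X \<subseteq> {A}"
  proof
    fix y assume "y \<in> lower_nbrs ?X"
    then have y: "y \<in> VH" "IAR_adj ?X y" "Suc (level y) = level ?X"
      by (auto simp: lower_nbrs_def)
    have "v \<notin> A" using A(1) extension by blast
    from y(2) show "y \<in> {A}"
    proof (cases rule: IAR_adjE)
      case (1 c)
      show ?thesis
      proof (cases "c = v")
        case False
        then have "c \<in> A" "y = insert v (A - {c})" using 1 \<open>v \<notin> A\<close> by auto
        moreover have "0 < card A" using \<open>c \<in> A\<close> finite_subset[OF A(1) finite_extensions]
          by (auto simp: card_gt_0_iff)
        moreover have "A - {c} \<subseteq> W" using A(1) by blast
        ultimately have "int (level y) = max_defect - (int (card A) - 1)"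
          using level_insert_subset[of "A - {c}"] y(1) by (simp add: of_nat_diff)
        then show ?thesis using level_insert_subset[OF A] y(3) by simp
      qed (use 1 \<open>v \<notin> A\<close> in simp)
    next
      case (2 b)
      then show ?thesis using maximal y(1) by simp
    qed
  qed
  then have "card (lower_nbrs ?X) \<le> 1" using card_mono[of "{A}"] by fastforce
  ultimately show False by simp
qed

lemma maximal_extension_set:
  obtains A where "A \<subseteq> W" "insert v A \<in> VH" "level (insert v A) = 0" "int (card A) = max_defect"
    "\<And>B. B \<subseteq> W \<Longrightarrow> insert v B \<in> VH \<Longrightarrow> card B \<le> card A"
proof -
  let ?K = "{A. A \<subseteq> W \<and> insert v A \<in> VH}"
  have "finite ?K" "{} \<in> ?K" using finite_extensions v_in_VH by simp_all
  then obtain A where A: "A \<in> ?K" and A_max: "\<And>B. B \<in> ?K \<Longrightarrow> card B \<le> card A"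
    using ex_max_card[of ?K "{}"] by auto
  have "finite A" using A finite_subset[OF _ finite_extensions] by blast
  have "insert t (insert v A) \<notin> VH" if "t \<notin> insert v A" for t
  proof
    assume t: "insert t (insert v A) \<in> VH"
    then have "insert t {v} \<in> VH" by (rule VH_subset) auto
    then have "insert t A \<in> ?K" using A that t by (auto simp: extensions_def insert_commute)
    then show False using A_max[of "insert t A"] that \<open>finite A\<close> by simp
  qed
  then have level_0: "level (insert v A) = 0" using level_maximal_insert_subset A by blast
  moreover have "int (card A) = max_defect" using level_insert_subset[of A] A level_0 by simp
  ultimately show ?thesis using that[of A] A A_max by blast
qed

lemma insert_pair_in_VH:
  assumes "2 \<le> max_defect" and a: "a \<in> W" "int (level {a}) = max_defect" and u: "u \<in> W" "u \<noteq> a"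
  shows "insert u (insert a {v}) \<in> VH"
proof (rule insertions_forced_by_lower_nbrs[where R = "{}" and T = "W - {a}"])
  have level_av: "int (level (insert a {v})) = max_defect - 1"
    using level_insert[OF a(1)] level_v by simp
  show "insert a {v} \<in> VH" using extension[OF a(1)] by simp
  show "1 \<le> level (insert a {v})" using level_av assms(1) by simp
  show "finite {}" "finite (W - {a})" using finite_extensions by simp_all
  have "0 < card W" using a(1) finite_extensions by (auto simp: card_gt_0_iff)
  then show "card {} + card (W - {a}) \<le> Suc (level (insert a {v}))"
    using card_W level_av a(1) by (simp add: of_nat_diff)
  show "u \<in> W - {a}" using u by simp
  fix y assume "y \<in> lower_nbrs (insert a {v})"
  then have y: "y \<in> VH" "IAR_adj (insert a {v}) y" "Suc (level y) = level (insert a {v})"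
    by (auto simp: lower_nbrs_def)
  have "a \<noteq> v" using extension[OF a(1)] by simp
  from y(2) show "y \<in> {} \<or> (\<exists>t\<in>W - {a}. y = insert t (insert a {v}))"
  proof (cases rule: IAR_adjE)
    case (1 c)
    then have "y = {v} \<or> y = {a}" using \<open>a \<noteq> v\<close> by auto
    then show ?thesis using y(3) level_av level_v a(2) by auto
  next
    case (2 t)
    have "insert t {v} \<in> VH" by (rule VH_subset[OF y(1)]) (use 2 in auto)
    then show ?thesis using 2 by (auto simp: extensions_def)
  qed
qed

lemma insert_extension_in_VH:
  assumes M2: "2 \<le> max_defect"
    and A: "A \<subseteq> W" "insert v A \<in> VH" "level (insert v A) = 0" and u: "u \<in> W"
  shows "insert v (insert u A) \<in> VH"
proof -
  have v_A: "v \<notin> A" using A(1) extension by blast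
  have fin_A: "finite A" using finite_subset[OF A(1) finite_extensions] .
  have level_a: "int (level {a}) = max_defect" if "a \<in> A" for a
    using level_singleton_of_bottom[OF A(2,3) insertI2[OF that]] level_insert_subset[OF A(1,2)] A(3)
      v_A fin_A by simp
  have pair: "insert u (insert a {v}) \<in> VH" if "a \<in> A" "a \<noteq> u" for a
    using insert_pair_in_VH[OF M2 _ level_a[OF that(1)] u] that A(1) by auto
  have "{v} \<union> insert u A \<in> VH"
  proof (rule union_in_VH_if_pairwise[OF v_in_VH])
    show "insert w {v} \<in> VH" if "w \<in> insert u A" for w using that u A(1) extension by blast
    fix w w' assume w: "w \<in> insert u A" "w' \<in> insert u A" "w \<noteq> w'"
    consider "w = u" "w' \<in> A" | "w' = u" "w \<in> A" | "w \<in> A" "w' \<in> A" using w by auto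
    then show "insert w' (insert w {v}) \<in> VH"
    proof cases
      case 1 then show ?thesis using pair[of w'] w(3) by (simp add: insert_commute)
    next
      case 2 then show ?thesis using pair[of w] w(3) by simp
    next
      case 3 then show ?thesis by (intro VH_subset[OF A(2)]) auto
    qed
  qed
  then show ?thesis by (simp add: insert_commute)
qed

end

context IAR_layering
begin

text \<open>If \<open>max_defect \<ge> 2\<close>, a largest \<open>A \<subseteq> W\<close> with \<open>insert v A\<close> independent has
  \<open>max_defect\<close> elements, while any further element of \<open>W\<close> can be added to it.\<close>

theorem max_defect_le_1:
  assumes "VH \<noteq> {}"
  shows "max_defect \<le> 1"
proof (rule ccontr)
  assume "\<not> max_defect \<le> 1"
  then have M2: "2 \<le> max_defect" by simp
  obtain x where x: "x \<in> VH" "defect x = max_defect" using max_defect_attained[OF assms] .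
  then have "card x = 1" using card_of_max_defect M2 by simp
  then obtain v where "x = {v}" by (rule card_1_singletonE)
  then interpret max_defect_singleton V E Ls v
    using x M2 by unfold_locales auto
  obtain A where A: "A \<subseteq> W" "insert v A \<in> VH" "level (insert v A) = 0" "int (card A) = max_defect"
    and A_max: "\<And>B. B \<subseteq> W \<Longrightarrow> insert v B \<in> VH \<Longrightarrow> card B \<le> card A"
    by (rule maximal_extension_set) (rule that)
  have fin_A: "finite A" using finite_subset[OF A(1) finite_extensions] .
  have "\<not> W \<subseteq> A"
  proof
    assume "W \<subseteq> A"
    then have "card W \<le> card A" by (rule card_mono[OF fin_A])
    then show False using card_W A(4) by simp
  qed
  then obtain u where u: "u \<in> W" "u \<notin> A" by blast
  have "insert v (insert u A) \<in> VH" by (rule insert_extension_in_VH[OF M2 A(1-3) u(1)])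
  then show False using A_max[of "insert u A"] u A(1) fin_A by (simp add: insert_commute)
qed

lemma defect_nonzero_bounds:
  assumes "x \<in> VH" "defect x \<noteq> 0"
  shows "max_defect = 1" "-1 \<le> min_defect"
proof -
  have ne: "VH \<noteq> {}" using assms(1) by blast
  have "1 \<le> max_defect"
  proof (cases "0 < defect x")
    case False
    then have "min_defect \<le> -1" using min_le_defect[OF assms(1)] assms(2) by simp
    then show ?thesis using neg_min_defect_le_max_defect[OF _ ne] by simp
  qed (use defect_le_max[OF assms(1)] in simp)
  then show "max_defect = 1" using max_defect_le_1[OF ne] by simp
  show "-1 \<le> min_defect"
    using neg_min_defect_le_max_defect[OF _ ne] \<open>max_defect = 1\<close> by fastforce
qed

lemma card_IAR_nbrs_of_odd_defect:
  assumes "max_defect = 1" "-1 \<le> min_defect" and y: "y \<in> VH" "odd (defect y)"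
  shows "card {z \<in> VH. IAR_adj y z} = 2"
proof -
  have "defect y \<noteq> 0" using y(2) by auto
  then have "defect y = 1 \<or> defect y = -1"
    using defect_le_max[OF y(1)] min_le_defect[OF y(1)] assms(1,2) by arith
  then show ?thesis
  proof
    assume "defect y = 1"
    then have "card y = 1" using card_of_max_defect[OF y(1)] assms(1) by simp
    then obtain u where "y = {u}" by (rule card_1_singletonE)
    then interpret max_defect_singleton V E Ls u
      using y \<open>defect y = 1\<close> assms(1) by unfold_locales auto
    show ?thesis using card_IAR_nbrs_singleton[OF v_in_VH] card_W assms(1) \<open>y = {u}\<close> by simp
  next
    assume "defect y = -1"
    then have "min_defect = -1" using min_le_defect[OF y(1)] assms(2) by simp
    then have "card y = 2" "extensions y = {}"
      using negative_min_defect[of y] y(1) \<open>defect y = -1\<close> by (auto simp: extensions_def)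
    then show ?thesis using card_IAR_nbrs[OF y(1)] by simp
  qed
qed

theorem level_eq_card:
  assumes no_even_cycle: "\<forall>x\<in>VH. \<not> is_even_cycle (component VH IAR_adj x) IAR_adj"
    and "x \<in> VH"
  shows "Suc (level x) = card x"
proof (rule ccontr)
  assume "Suc (level x) \<noteq> card x"
  then have "defect x \<noteq> 0" unfolding defect_def by simp
  then have bounds: "max_defect = 1" "-1 \<le> min_defect"
    using defect_nonzero_bounds[OF \<open>x \<in> VH\<close>] by auto
  have "VH \<noteq> {}" using \<open>x \<in> VH\<close> by blast
  then obtain x1 where x1: "x1 \<in> VH" "defect x1 = max_defect" by (rule max_defect_attained)
  then have "card x1 = 1" using card_of_max_defect bounds(1) by simp
  then obtain v where "x1 = {v}" by (rule card_1_singletonE)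
  let ?C = "component VH IAR_adj {v}"
  have odd_defect: "odd (defect y)" if "y \<in> ?C" for y
    using that by (rule component_induct) (use x1 bounds \<open>x1 = {v}\<close> even_defect_IAR_adj in auto)
  have "two_regular_component VH IAR_adj {v}"
  proof
    show "finite VH" "{v} \<in> VH" using finite_VH x1 \<open>x1 = {v}\<close> by auto
    show "IAR_adj y z \<Longrightarrow> IAR_adj z y" for y z by (rule IAR_adj_symI)
    show "\<not> IAR_adj y y" for y by (rule IAR_adj_irrefl)
    show "card {z \<in> VH. IAR_adj y z} = 2" if "y \<in> ?C" for y
      by (rule card_IAR_nbrs_of_odd_defect[OF bounds subsetD[OF component_subset that] odd_defect[OF that]])
  qed
  then have "is_even_cycle ?C IAR_adj"
  proof (rule two_regular_bipartite_component_is_even_cycle[where col = "\<lambda>y. odd (card y)"])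
    fix y z assume "y \<in> ?C" "z \<in> ?C" "IAR_adj y z"
    then have "card y = Suc (card z) \<or> card z = Suc (card y)"
      using IAR_adj_card[OF VH_finite[OF subsetD[OF component_subset]]] by fastforce
    then show "odd (card y) \<noteq> odd (card z)" by auto
  qed
  then show False using no_even_cycle x1 \<open>x1 = {v}\<close> by blast
qed

lemma layers_eq_size_layers:
  assumes level: "\<And>x. x \<in> VH \<Longrightarrow> Suc (level x) = card x"
  shows "Ls = size_layers V E"
proof -
  have layer: "Ls ! i = {S. indep_set V E S \<and> card S = Suc i}" if "i < length Ls" for i
  proof -
    have "Ls ! i = {y \<in> VH. card y = Suc i}" using layer_eq[OF that] level by force
    then show ?thesis using IAR_verts_iff_card[OF finite_V] by auto
  qed
  have "length Ls \<le> indep_number V E"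
  proof (rule ccontr)
    assume "\<not> length Ls \<le> indep_number V E"
    then obtain S where "S \<in> Ls ! indep_number V E" using layers_nonempty by fastforce
    then show False
      using layer card_le_indep_number[OF finite_V] \<open>\<not> length Ls \<le> _\<close> by fastforce
  qed
  moreover have "indep_number V E \<le> length Ls"
  proof (cases "indep_number V E = 0")
    case False
    obtain S where S: "indep_set V E S" "card S = indep_number V E"
      using indep_number_attained[OF finite_V] .
    then have "S \<in> VH" using False IAR_verts_iff_card[OF finite_V] by simp
    then show ?thesis using level_less_length level S(2) by fastforce
  qed simp
  ultimately have len: "length Ls = length (size_layers V E)" by (simp add: length_size_layers)
  then show ?thesis
    by (rule nth_equalityI) (use len in \<open>auto simp: layer mem_size_layers_iff\<close>)
qed

end

theorem lemma4p4:
  fixes V :: "'a set" and E :: "'a \<Rightarrow> 'a \<Rightarrow> bool"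
  assumes "finite V"
    and "simple_graph V E"
    and "\<forall>x\<in>IAR_verts V E. \<not> is_even_cycle (component (IAR_verts V E) IAR_adj x) IAR_adj"
  shows "layering (IAR_verts V E) IAR_adj
           (map (\<lambda>i. {S. indep_set V E S \<and> card S = i}) [1..<indep_number V E + 1])
     \<and> (\<forall>Ls. layering (IAR_verts V E) IAR_adj Ls \<longrightarrow>
           Ls = map (\<lambda>i. {S. indep_set V E S \<and> card S = i}) [1..<indep_number V E + 1])"
proof -
  have "Ls = size_layers V E" if "layering (IAR_verts V E) IAR_adj Ls" for Ls
  proof -
    interpret IAR_layering V E Ls using assms(1) that by unfold_locales
    show ?thesis using layers_eq_size_layers level_eq_card[OF assms(3)] by blast
  qed
  then show ?thesis
    using size_layers_is_layering[OF assms(1)] unfolding size_layers_def by blast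
qed

end
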